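(* Let $G\subset \mathrm{GL}_n(\mathbb{C})$ be a complex reflection group, let $L=\mathbb{C}(x_1,\dots,x_n)$ with the action of $G$ described in the context, and let $\boldsymbol{\phi}=(\phi_1,\dots,\phi_n)$ be an $n$-tuple of fundamental invariants of $G$. Put $K=\mathbb{C}(z_1,\dots,z_n)$ with $z_i=\phi_i(\mathbf{x})$, so $K=L^G\subseteq L$, and let $\delta_i$ ($1\le i\le n$) denote the unique derivation of $L$ extending $\partial/\partial z_i$ on $K$. Let $J_{\boldsymbol{\phi}}=\bigl(\partial\phi_i/\partial x_j\bigr)_{1\le i,j\le n}$ be the Jacobian matrix, and define $A_i:=\delta_i(J_{\boldsymbol{\phi}})\,J_{\boldsymbol{\phi}}^{-1}\in\mathfrak{gl}_n(L)$ for $1\le i\le n$, where $\delta_i$ is applied entrywise. Then: (1) $A_i\in\mathfrak{gl}_n(K)$ for each $1\le i\le n$; (2) $\delta_i(A_j)-\delta_j(A_i)=A_iA_j-A_jA_i$ for all $1\le i,j\le n$; and (3) $L$ is a Picard-Vessiot extension of $K$ for the linear differential system $\{\delta_i(\mathbf{y})=A_i\mathbf{y}\mid 1\le i\le n\}$.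
   Context: A complex reflection is a matrix $M\in\mathrm{GL}_n(\mathbb{C})$ of finite order that fixes pointwise some hyperplane (codimension-one subspace); a complex reflection group is a finite subgroup of $\mathrm{GL}_n(\mathbb{C})$ generated by complex reflections. Such $G$ acts on $S=\mathbb{C}[x_1,\dots,x_n]$ and on $L=\mathbb{C}(x_1,\dots,x_n)$ by $\gamma_M(f)(\mathbf{x})=f(\mathbf{x}\cdot M^{-\top})$, where $\mathbf{x}=(x_1,\dots,x_n)$ is a row vector. A set of fundamental invariants is a tuple $\phi_1,\dots,\phi_n$ of homogeneous, algebraically independent $G$-invariant polynomials with $S^G=\mathbb{C}[\phi_1,\dots,\phi_n]$ (these exist for complex reflection groups), and then $L^G=\mathbb{C}(\phi_1,\dots,\phi_n)$, with $L/K$ a finite Galois extension, so each derivation $\partial/\partial z_i$ of $K$ extends uniquely to a derivation $\delta_i$ of $L$, and these pairwise commute. For a field $F$ with commuting derivations $\delta_1,\dots,\delta_n$, its constants are $C_F=\{c\in F\mid \delta_i(c)=0\ \forall i\}$. Given an integrable system $\{\delta_i(\mathbf{y})=A_i\mathbf{y}\}$ with $A_i\in\mathfrak{gl}_N(K)$, a differential field extension $L\supseteq K$ is a Picard-Vessiot extension for it if $C_L=C_K$ and $L$ is generated as a field over $K$ by the entries of some $U\in\mathrm{GL}_N(L)$ with $\delta_i(U)=A_iU$ for all $i$. *)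

theory Defs
  imports "HOL-Analysis.Analysis" "HOL-Library.Poly_Mapping"
          "HOL-Computational_Algebra.Fraction_Field"
begin

text \<open>S = C[x_i | i :: 'n] (the index type 'n has CARD('n) = n elements);
  L = C(x_i | i :: 'n) is its fraction field.\<close>

type_synonym 'n mpoly = "('n \<Rightarrow>\<^sub>0 nat) \<Rightarrow>\<^sub>0 complex"
type_synonym 'n ratf = "'n mpoly fract"

definition mp_const :: "complex \<Rightarrow> 'n mpoly" where
  "mp_const c = Poly_Mapping.single 0 c"

definition mp_var :: "'n \<Rightarrow> 'n mpoly" where
  "mp_var i = Poly_Mapping.single (Poly_Mapping.single i 1) 1"

definition mp_subst :: "('n::finite \<Rightarrow> 'm mpoly) \<Rightarrow> 'n mpoly \<Rightarrow> 'm mpoly" where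
  "mp_subst s p = (\<Sum>m\<in>Poly_Mapping.keys p. mp_const (Poly_Mapping.lookup p m) * (\<Prod>i\<in>UNIV. s i ^ Poly_Mapping.lookup (m::'n \<Rightarrow>\<^sub>0 nat) i))"

definition mp_pderiv :: "'n \<Rightarrow> 'n mpoly \<Rightarrow> 'n mpoly" where
  "mp_pderiv j p = (\<Sum>m\<in>Poly_Mapping.keys p.
      Poly_Mapping.single (m - Poly_Mapping.single j 1) (of_nat (Poly_Mapping.lookup m j) * Poly_Mapping.lookup p m))"

definition mp_homogeneous :: "'n::finite mpoly \<Rightarrow> bool" where
  "mp_homogeneous p \<longleftrightarrow> (\<exists>d. \<forall>m\<in>Poly_Mapping.keys p. (\<Sum>i\<in>UNIV. Poly_Mapping.lookup (m::'n \<Rightarrow>\<^sub>0 nat) i) = d)"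

definition to_ratf :: "'n::{finite,linorder} mpoly \<Rightarrow> 'n ratf" where
  "to_ratf p = Fract p 1"

text \<open>Matrix powers are written via iterated matrix product (** ), since ^ on vec is componentwise.\<close>
definition complex_reflection :: "complex^'n^'n \<Rightarrow> bool" where
  "complex_reflection M \<longleftrightarrow> invertible M \<and> (\<exists>k>0. ((\<lambda>X. M ** X) ^^ k) (mat 1) = mat 1) \<and>
     (\<exists>H. subspace H \<and> dim H = CARD('n) - 1 \<and> (\<forall>v\<in>H. M *v v = v))"

inductive_set generated_group :: "(complex^'n^'n) set \<Rightarrow> (complex^'n^'n) set"
  for R where
  gen_one: "mat 1 \<in> generated_group R"
| gen_mult: "r \<in> R \<Longrightarrow> g \<in> generated_group R \<Longrightarrow> r ** g \<in> generated_group R"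
| gen_inv: "r \<in> R \<Longrightarrow> g \<in> generated_group R \<Longrightarrow> matrix_inv r ** g \<in> generated_group R"

definition complex_reflection_group :: "(complex^'n^'n) set \<Rightarrow> bool" where
  "complex_reflection_group G \<longleftrightarrow> finite G \<and> (\<forall>M\<in>G. invertible M) \<and>
     G = generated_group {M\<in>G. complex_reflection M}"

text \<open>gamma_M(f)(x) = f(x M^{-T}) for the row vector x, i.e. the substitution
  x_j := sum_k (M^{-1})_{jk} x_k.\<close>
definition gamma :: "complex^'n^'n \<Rightarrow> 'n::finite mpoly \<Rightarrow> 'n mpoly" where
  "gamma M f = mp_subst (\<lambda>j. \<Sum>k\<in>UNIV. mp_const (matrix_inv M $ j $ k) * mp_var k) f"

definition invariant_ring :: "(complex^'n^'n) set \<Rightarrow> 'n::finite mpoly set" where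
  "invariant_ring G = {f. \<forall>M\<in>G. gamma M f = f}"

definition fundamental_invariants :: "(complex^'n^'n) set \<Rightarrow> ('n::finite \<Rightarrow> 'n mpoly) \<Rightarrow> bool" where
  "fundamental_invariants G \<phi> \<longleftrightarrow>
     (\<forall>i. mp_homogeneous (\<phi> i)) \<and>
     (\<forall>f::'n mpoly. mp_subst \<phi> f = 0 \<longrightarrow> f = 0) \<and>
     (\<forall>i. \<phi> i \<in> invariant_ring G) \<and>
     invariant_ring G = range (\<lambda>f. mp_subst \<phi> f)"

definition is_subfield :: "'a::field set \<Rightarrow> bool" where
  "is_subfield F \<longleftrightarrow> 0 \<in> F \<and> 1 \<in> F \<and> (\<forall>a\<in>F. \<forall>b\<in>F. a + b \<in> F \<and> a * b \<in> F) \<and>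
     (\<forall>a\<in>F. - a \<in> F \<and> inverse a \<in> F)"

definition gen_field :: "'a::field set \<Rightarrow> 'a set" where
  "gen_field T = \<Inter>{F. is_subfield F \<and> T \<subseteq> F}"

definition is_derivation :: "('a::field \<Rightarrow> 'a) \<Rightarrow> bool" where
  "is_derivation D \<longleftrightarrow> (\<forall>a b. D (a + b) = D a + D b \<and> D (a * b) = a * D b + b * D a)"

definition Kfield :: "('n::{finite,linorder} \<Rightarrow> 'n mpoly) \<Rightarrow> 'n ratf set" where
  "Kfield \<phi> = gen_field (range (\<lambda>c. to_ratf (mp_const c)) \<union> range (\<lambda>i. to_ratf (\<phi> i)))"

text \<open>delta_i: the unique derivation of L extending d/dz_i on K = C(z), i.e. the unique
  derivation of L vanishing on C and sending z_j to [i = j].\<close>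
definition delta :: "('n::{finite,linorder} \<Rightarrow> 'n mpoly) \<Rightarrow> 'n \<Rightarrow> 'n ratf \<Rightarrow> 'n ratf" where
  "delta \<phi> i = (THE D. is_derivation D \<and> (\<forall>c. D (to_ratf (mp_const c)) = 0) \<and>
                     (\<forall>j. D (to_ratf (\<phi> j)) = (if j = i then 1 else 0)))"

definition map_mat :: "('a \<Rightarrow> 'b) \<Rightarrow> 'a^'n^'m \<Rightarrow> 'b^'n^'m" where
  "map_mat f A = (\<chi> i j. f (A $ i $ j))"

definition jacobian :: "('n::{finite,linorder} \<Rightarrow> 'n mpoly) \<Rightarrow> (('n ratf, 'n) vec, 'n) vec" where
  "jacobian \<phi> = (\<chi> i j. to_ratf (mp_pderiv j (\<phi> i)))"

definition Amat :: "('n::{finite,linorder} \<Rightarrow> 'n mpoly) \<Rightarrow> 'n \<Rightarrow> (('n ratf, 'n) vec, 'n) vec" where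
  "Amat \<phi> i = map_mat (delta \<phi> i) (jacobian \<phi>) ** matrix_inv (jacobian \<phi>)"

definition picard_vessiot :: "'a::field set \<Rightarrow> ('i \<Rightarrow> 'a \<Rightarrow> 'a) \<Rightarrow> ('i \<Rightarrow> 'a^'N^'N) \<Rightarrow> bool" where
  "picard_vessiot K \<delta> A \<longleftrightarrow>
     {c. \<forall>i. \<delta> i c = 0} = {c\<in>K. \<forall>i. \<delta> i c = 0} \<and>
     (\<exists>U::'a^'N^'N. invertible U \<and> (\<forall>i. map_mat (\<delta> i) U = A i ** U) \<and>
        gen_field (K \<union> {U $ r $ s | r s. True}) = UNIV)"

end

theory Submission
  imports Defs
begin

text \<open>\<open>L = \<complex>(x)\<close> is a Galois extension of \<open>K = \<complex>(\<phi>) = L\<^sup>G\<close>, and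
  \<open>\<delta>\<^sub>i = \<Sum>\<^sub>l (J\<^sup>-\<^sup>1)\<^sub>l\<^sub>i \<partial>/\<partial>x\<^sub>l\<close>. Writing \<open>\<sigma>\<^sub>M\<close> (ratf_act below) for the action of \<open>M \<in> G\<close> on \<open>L\<close>,
  the chain rule and the invariance of \<open>\<phi>\<close> give \<open>\<sigma>\<^sub>M(J) = J M\<close>, and the \<open>\<sigma>\<^sub>M\<close> commute with
  the \<open>\<delta>\<^sub>i\<close>; so \<open>A\<^sub>i = \<delta>\<^sub>i(J) J\<^sup>-\<^sup>1\<close> is \<open>G\<close>-invariant and lies in \<open>K\<close>. Integrability follows
  from \<open>\<delta>\<^sub>i \<delta>\<^sub>j = \<delta>\<^sub>j \<delta>\<^sub>i\<close>. \<open>J\<close> itself is a fundamental matrix: a common constant of the \<open>\<delta>\<^sub>i\<close>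
  is killed by every \<open>\<partial>/\<partial>x\<^sub>l\<close>, hence lies in \<open>\<complex>\<close>; and Euler's identity
  \<open>J x = (deg \<phi>\<^sub>k \<cdot> \<phi>\<^sub>k)\<^sub>k\<close> with Cramer's rule gives \<open>x\<^sub>l \<in> K(J)\<close>, so \<open>K(J) = L\<close>.\<close>

section \<open>Derivations and homomorphisms of fraction fields\<close>

definition is_ring_derivation :: "('a::comm_ring_1 \<Rightarrow> 'a) \<Rightarrow> bool" where
  "is_ring_derivation D \<longleftrightarrow> (\<forall>a b. D (a + b) = D a + D b \<and> D (a * b) = a * D b + b * D a)"

lemma ring_derivation_add: "is_ring_derivation D \<Longrightarrow> D (a + b) = D a + D b"
  by (simp add: is_ring_derivation_def)

lemma ring_derivation_mult: "is_ring_derivation D \<Longrightarrow> D (a * b) = a * D b + b * D a"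
  by (simp add: is_ring_derivation_def)

lemma ring_derivation_1: "is_ring_derivation D \<Longrightarrow> D 1 = 0"
  using ring_derivation_mult[of D 1 1] by simp

lemma is_derivation_iff_ring_derivation: "is_derivation D \<longleftrightarrow> is_ring_derivation D"
  by (simp add: is_derivation_def is_ring_derivation_def)

lemma derivation_add: "is_derivation D \<Longrightarrow> D (a + b) = D a + D b"
  by (simp add: is_derivation_def)

lemma derivation_mult: "is_derivation D \<Longrightarrow> D (a * b) = a * D b + b * D a"
  by (simp add: is_derivation_def)

lemma derivation_0: "is_derivation D \<Longrightarrow> D 0 = 0"
  using derivation_mult[of D 0 0] by simp

lemma derivation_1: "is_derivation D \<Longrightarrow> D 1 = 0"
  by (simp add: is_derivation_iff_ring_derivation ring_derivation_1)

lemma derivation_uminus: "is_derivation D \<Longrightarrow> D (- a) = - D a"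
  using derivation_add[of D "- a" a] derivation_0[of D] by (simp add: eq_neg_iff_add_eq_0)

lemma derivation_sum: "is_derivation D \<Longrightarrow> D (\<Sum>i\<in>A. f i) = (\<Sum>i\<in>A. D (f i))"
  by (induction A rule: infinite_finite_induct) (simp_all add: derivation_0 derivation_add)

lemma derivation_inverse:
  assumes D: "is_derivation D"
  shows "D (inverse a) = - D a * inverse a * inverse a"
proof (cases "a = 0")
  case False
  have "0 = D (a * inverse a)" using False derivation_1[OF D] by simp
  also have "\<dots> = a * D (inverse a) + inverse a * D a" by (rule derivation_mult[OF D])
  finally show ?thesis using False by (simp add: field_simps eq_neg_iff_add_eq_0)
qed (simp add: derivation_0[OF D])

lemma is_derivation_lincomb:
  assumes "\<And>l. is_derivation (D l)"
  shows "is_derivation (\<lambda>x. \<Sum>l\<in>A. D l x * w l)"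
  using assms by (simp add: is_derivation_def sum.distrib sum_distrib_left algebra_simps)

lemma is_derivation_diff:
  assumes "is_derivation D1" "is_derivation D2"
  shows "is_derivation (\<lambda>x. D1 x - D2 x)"
  using assms by (simp add: is_derivation_def algebra_simps)

lemma is_derivation_commutator:
  assumes "is_derivation D1" "is_derivation D2"
  shows "is_derivation (\<lambda>x. D1 (D2 x) - D2 (D1 x))"
  using assms by (simp add: is_derivation_def algebra_simps)

definition is_ring_hom :: "('a::comm_ring_1 \<Rightarrow> 'b::comm_ring_1) \<Rightarrow> bool" where
  "is_ring_hom h \<longleftrightarrow> (\<forall>a b. h (a + b) = h a + h b \<and> h (a * b) = h a * h b) \<and> h 1 = 1"

lemma ring_hom_add: "is_ring_hom h \<Longrightarrow> h (a + b) = h a + h b"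
  by (simp add: is_ring_hom_def)

lemma ring_hom_mult: "is_ring_hom h \<Longrightarrow> h (a * b) = h a * h b"
  by (simp add: is_ring_hom_def)

lemma ring_hom_1: "is_ring_hom h \<Longrightarrow> h 1 = 1"
  by (simp add: is_ring_hom_def)

lemma ring_hom_0: "is_ring_hom h \<Longrightarrow> h 0 = 0"
  using ring_hom_add[of h 0 0] by simp

lemma ring_hom_uminus: "is_ring_hom h \<Longrightarrow> h (- a) = - h a"
  using ring_hom_add[of h "- a" a] ring_hom_0[of h] by (simp add: eq_neg_iff_add_eq_0)

lemma ring_hom_sum: "is_ring_hom h \<Longrightarrow> h (\<Sum>i\<in>A. f i) = (\<Sum>i\<in>A. h (f i))"
  by (induction A rule: infinite_finite_induct) (simp_all add: ring_hom_0 ring_hom_add)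

lemma ring_hom_prod: "is_ring_hom h \<Longrightarrow> h (\<Prod>i\<in>A. f i) = (\<Prod>i\<in>A. h (f i))"
  by (induction A rule: infinite_finite_induct) (simp_all add: ring_hom_1 ring_hom_mult)

definition fract_derivation :: "('a::idom \<Rightarrow> 'a) \<Rightarrow> 'a fract \<Rightarrow> 'a fract" where
  "fract_derivation D x =
     (SOME y. \<exists>p q. q \<noteq> 0 \<and> x = Fract p q \<and> y = Fract (q * D p - p * D q) (q * q))"

definition fract_map :: "('a::idom \<Rightarrow> 'b::idom) \<Rightarrow> 'a fract \<Rightarrow> 'b fract" where
  "fract_map h x = (SOME y. \<exists>p q. q \<noteq> 0 \<and> x = Fract p q \<and> y = Fract (h p) (h q))"

lemma fract_derivation_Fract:
  assumes D: "is_ring_derivation D" and q: "q \<noteq> 0"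
  shows "fract_derivation D (Fract p q) = Fract (q * D p - p * D q) (q * q)"
proof -
  have well_defined: "Fract (q * D p - p * D q) (q * q) = Fract (q' * D p' - p' * D q') (q' * q')"
    if q': "q' \<noteq> 0" and eq: "Fract p q = Fract p' q'" for p' q'
  proof -
    have e: "p * q' = p' * q" using eq q q' by (simp add: eq_fract)
    have "D p * q' + p * D q' = D p' * q + p' * D q"
      using arg_cong[OF e, of D] D by (simp add: ring_derivation_mult mult_ac add_ac)
    then have e': "q' * D p = p' * D q + q * D p' - p * D q'"
      by (simp add: algebra_simps eq_diff_eq)
    have "(q * D p - p * D q) * (q' * q') = q * q' * (q' * D p) - (p * q') * q' * D q"
      by (simp add: algebra_simps)
    also have "\<dots> = q * q' * (p' * D q + q * D p' - p * D q') - (p' * q) * q' * D q"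
      by (simp only: e' e)
    also have "\<dots> = q * q * q' * D p' - q * (p * q') * D q'"
      by (simp add: algebra_simps)
    also have "\<dots> = (q' * D p' - p' * D q') * (q * q)"
      by (simp add: e algebra_simps)
    finally show ?thesis using q q' by (simp add: eq_fract)
  qed
  let ?P = "\<lambda>y. \<exists>p' q'. q' \<noteq> 0 \<and> Fract p q = Fract p' q' \<and> y = Fract (q' * D p' - p' * D q') (q' * q')"
  have "?P (Fract (q * D p - p * D q) (q * q))" using q by blast
  then have "?P (fract_derivation D (Fract p q))" unfolding fract_derivation_def by (rule someI)
  then show ?thesis using well_defined by metis
qed

lemma fract_derivation_Fract_1:
  "is_ring_derivation D \<Longrightarrow> fract_derivation D (Fract p 1) = Fract (D p) 1"
  by (simp add: fract_derivation_Fract ring_derivation_1)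

lemma is_derivation_fract_derivation:
  assumes D: "is_ring_derivation D"
  shows "is_derivation (fract_derivation D)"
  unfolding is_derivation_def
proof (intro allI conjI)
  fix x y :: "'a fract"
  obtain a b where x: "x = Fract a b" "b \<noteq> 0" by (cases x)
  obtain c e where y: "y = Fract c e" "e \<noteq> 0" by (cases y)
  show "fract_derivation D (x + y) = fract_derivation D x + fract_derivation D y"
    and "fract_derivation D (x * y) = x * fract_derivation D y + y * fract_derivation D x"
    using x y D
    by (simp_all add: fract_derivation_Fract eq_fract ring_derivation_add ring_derivation_mult
        algebra_simps)
qed

lemma fract_map_Fract:
  assumes h: "is_ring_hom h" and inj: "\<And>a. h a = 0 \<Longrightarrow> a = 0" and q: "q \<noteq> 0"
  shows "fract_map h (Fract p q) = Fract (h p) (h q)"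
proof -
  let ?P = "\<lambda>y. \<exists>p' q'. q' \<noteq> 0 \<and> Fract p q = Fract p' q' \<and> y = Fract (h p') (h q')"
  have "?P (Fract (h p) (h q))" using q by blast
  then have "?P (fract_map h (Fract p q))" unfolding fract_map_def by (rule someI)
  then obtain p' q' where pq: "q' \<noteq> 0" "Fract p q = Fract p' q'"
    and eq: "fract_map h (Fract p q) = Fract (h p') (h q')"
    by blast
  have "p * q' = p' * q" using pq q by (simp add: eq_fract)
  then have "h p * h q' = h p' * h q" using h by (metis ring_hom_mult)
  moreover have "h q \<noteq> 0" "h q' \<noteq> 0" using inj q pq(1) by auto
  ultimately show ?thesis using eq by (simp add: eq_fract)
qed

lemma is_ring_hom_fract_map:
  assumes h: "is_ring_hom h" and inj: "\<And>a. h a = 0 \<Longrightarrow> a = 0"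
  shows "is_ring_hom (fract_map h)"
  unfolding is_ring_hom_def
proof (intro allI conjI)
  fix x y :: "'a fract"
  obtain a b where x: "x = Fract a b" "b \<noteq> 0" by (cases x)
  obtain c e where y: "y = Fract c e" "e \<noteq> 0" by (cases y)
  have "h b \<noteq> 0" "h e \<noteq> 0" using inj x y by auto
  then show "fract_map h (x + y) = fract_map h x + fract_map h y"
    and "fract_map h (x * y) = fract_map h x * fract_map h y"
    using x y by (simp_all add: fract_map_Fract[OF h inj] ring_hom_add[OF h] ring_hom_mult[OF h])
  show "fract_map h 1 = 1"
    by (simp add: One_fract_def fract_map_Fract[OF h inj] ring_hom_1[OF h])
qed

lemma subfield_0: "is_subfield F \<Longrightarrow> 0 \<in> F"
  by (simp add: is_subfield_def)

lemma subfield_1: "is_subfield F \<Longrightarrow> 1 \<in> F"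
  by (simp add: is_subfield_def)

lemma subfield_add: "is_subfield F \<Longrightarrow> a \<in> F \<Longrightarrow> b \<in> F \<Longrightarrow> a + b \<in> F"
  by (simp add: is_subfield_def)

lemma subfield_mult: "is_subfield F \<Longrightarrow> a \<in> F \<Longrightarrow> b \<in> F \<Longrightarrow> a * b \<in> F"
  by (simp add: is_subfield_def)

lemma subfield_uminus: "is_subfield F \<Longrightarrow> a \<in> F \<Longrightarrow> - a \<in> F"
  by (simp add: is_subfield_def)

lemma subfield_divide: "is_subfield F \<Longrightarrow> a \<in> F \<Longrightarrow> b \<in> F \<Longrightarrow> a / b \<in> F"
  by (simp add: is_subfield_def divide_inverse)

lemma subfield_sum: "is_subfield F \<Longrightarrow> (\<And>i. i \<in> A \<Longrightarrow> f i \<in> F) \<Longrightarrow> (\<Sum>i\<in>A. f i) \<in> F"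
  by (induction A rule: infinite_finite_induct) (simp_all add: subfield_0 subfield_add)

lemma subfield_prod: "is_subfield F \<Longrightarrow> (\<And>i. i \<in> A \<Longrightarrow> f i \<in> F) \<Longrightarrow> (\<Prod>i\<in>A. f i) \<in> F"
  by (induction A rule: infinite_finite_induct) (simp_all add: subfield_1 subfield_mult)

lemma subfield_of_nat: "is_subfield F \<Longrightarrow> of_nat n \<in> F"
  by (induction n) (simp_all add: subfield_0 subfield_1 subfield_add)

lemma subfield_det:
  fixes A :: "'a::field^'n^'n"
  assumes F: "is_subfield F" and A: "\<And>i j. A $ i $ j \<in> F"
  shows "det A \<in> F"
  unfolding det_def sign_def
  by (intro subfield_sum[OF F] subfield_mult[OF F] subfield_prod[OF F])
    (simp_all add: A subfield_1[OF F] subfield_uminus[OF F])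

lemma subfield_cramer:
  fixes A :: "'a::field^'n^'n"
  assumes F: "is_subfield F" and A: "\<And>i j. A $ i $ j \<in> F" and b: "\<And>i. b $ i \<in> F"
    and det: "det A \<noteq> 0" and x: "A *v x = b"
  shows "x $ l \<in> F"
proof -
  have "x $ l = det (\<chi> i j. if j = l then b $ i else A $ i $ j) / det A"
    using cramer[OF det] x by simp
  then show ?thesis by (simp add: subfield_divide[OF F] subfield_det[OF F] A b)
qed

lemma is_subfield_gen_field: "is_subfield (gen_field T)"
  unfolding gen_field_def is_subfield_def by auto

lemma gen_field_superset: "T \<subseteq> gen_field T"
  unfolding gen_field_def by auto

lemma gen_field_least: "is_subfield F \<Longrightarrow> T \<subseteq> F \<Longrightarrow> gen_field T \<subseteq> F"
  unfolding gen_field_def by auto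

lemma is_subfield_derivation_kernel:
  assumes "is_derivation D"
  shows "is_subfield {x. D x = 0}"
  using assms
  by (simp add: is_subfield_def derivation_0 derivation_1 derivation_add derivation_mult
      derivation_uminus derivation_inverse)

lemma derivation_poly:
  assumes D: "is_derivation D" and coeffs: "\<And>k. D (coeff Q k) = 0"
  shows "D (poly Q a) = poly (pderiv Q) a * D a"
  using coeffs
proof (induction Q rule: pCons_induct)
  case (pCons c Q)
  have "D c = 0" "D (poly Q a) = poly (pderiv Q) a * D a"
    using pCons.prems[of 0] pCons.IH pCons.prems[of "Suc _"] by simp_all
  then show ?case
    by (simp add: derivation_add[OF D] derivation_mult[OF D] pderiv_pCons algebra_simps)
qed (simp add: derivation_0[OF D])

text \<open>Induction on the degree of \<open>Q\<close>: if \<open>Q'(a) \<noteq> 0\<close> then \<open>0 = D(Q(a)) = Q'(a) D(a)\<close>;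
  otherwise pass to \<open>Q'\<close>, which is nonzero in characteristic zero.\<close>

lemma derivation_algebraic_eq_0:
  fixes a :: "'a::field"
  assumes D: "is_derivation D" and F: "is_subfield F" and DF: "\<And>y. y \<in> F \<Longrightarrow> D y = 0"
    and char_0: "\<And>n::nat. n > 0 \<Longrightarrow> (of_nat n :: 'a) \<noteq> 0"
  shows "Q \<noteq> 0 \<Longrightarrow> (\<forall>k. coeff Q k \<in> F) \<Longrightarrow> poly Q a = 0 \<Longrightarrow> D a = 0"
proof (induction "degree Q" arbitrary: Q rule: less_induct)
  case less
  have pos: "degree Q > 0"
  proof (rule ccontr)
    assume "\<not> degree Q > 0"
    then have Q: "Q = [:coeff Q 0:]" by (metis degree_0_id gr0I)
    then have "poly Q a = coeff Q 0" by (metis poly_pCons mult_zero_right poly_0 add.right_neutral)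
    with less.prems have "coeff Q 0 = 0" by simp
    with Q less.prems(1) show False by simp
  qed
  let ?Q' = "pderiv Q"
  have coeff_Q': "coeff ?Q' k \<in> F" for k
    unfolding coeff_pderiv
    by (rule subfield_mult[OF F subfield_of_nat[OF F]]) (use less.prems(2) in blast)
  have "coeff ?Q' (degree Q - 1) = of_nat (degree Q) * lead_coeff Q"
    using pos by (simp add: coeff_pderiv)
  moreover have "lead_coeff Q \<noteq> 0" using less.prems(1) by simp
  ultimately have Q'_nz: "?Q' \<noteq> 0" using char_0[OF pos] by (metis coeff_0 mult_eq_0_iff)
  have "degree ?Q' \<le> degree Q - 1"
    by (rule degree_le) (auto simp: coeff_pderiv coeff_eq_0)
  then have deg: "degree ?Q' < degree Q" using pos by linarith
  show "D a = 0"
  proof (cases "poly ?Q' a = 0")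
    case True
    show ?thesis by (rule less.hyps[OF deg Q'_nz]) (use coeff_Q' True in auto)
  next
    case False
    have "0 = D (poly Q a)" using less.prems(3) derivation_0[OF D] by simp
    also have "\<dots> = poly ?Q' a * D a"
      by (rule derivation_poly[OF D]) (use less.prems(2) DF in auto)
    finally show ?thesis using False by simp
  qed
qed

lemma map_poly_ring_hom_mult:
  assumes h: "is_ring_hom h"
  shows "map_poly h (p * q) = map_poly h p * map_poly h q"
  by (rule poly_eqI)
    (simp add: coeff_map_poly ring_hom_0[OF h] coeff_mult ring_hom_sum[OF h] ring_hom_mult[OF h])

lemma map_poly_ring_hom_prod:
  assumes h: "is_ring_hom h"
  shows "map_poly h (\<Prod>i\<in>A. f i) = (\<Prod>i\<in>A. map_poly h (f i))"
  by (induction A rule: infinite_finite_induct)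
    (simp_all add: ring_hom_1[OF h] map_poly_ring_hom_mult[OF h])

lemma map_mat_nth [simp]: "map_mat f A $ i $ j = f (A $ i $ j)"
  by (simp add: map_mat_def)

lemma map_mat_ring_hom_mult:
  assumes h: "is_ring_hom h"
  shows "map_mat h (A ** B) = map_mat h A ** map_mat h B"
  by (simp add: vec_eq_iff matrix_matrix_mult_def ring_hom_sum[OF h] ring_hom_mult[OF h])

lemma map_mat_ring_hom_mat_1:
  assumes h: "is_ring_hom h"
  shows "map_mat h (mat 1) = mat 1"
  by (simp add: vec_eq_iff mat_def ring_hom_0[OF h] ring_hom_1[OF h])

lemma map_mat_derivation_mult:
  assumes D: "is_derivation D"
  shows "map_mat D (A ** B) = map_mat D A ** B + A ** map_mat D B"
  by (simp add: vec_eq_iff matrix_matrix_mult_def derivation_sum[OF D] derivation_mult[OF D]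
      sum.distrib algebra_simps)

lemma matrix_mul_uminus_right: "(A::'a::ring_1^'n^'m) ** (- B) = - (A ** B)"
  by (simp add: vec_eq_iff matrix_matrix_mult_def sum_negf)

lemma matrix_inv_left_right:
  fixes A :: "'a::semiring_1^'n^'n"
  assumes "invertible A"
  shows matrix_inv_right: "A ** matrix_inv A = mat 1" and matrix_inv_left: "matrix_inv A ** A = mat 1"
proof -
  have "\<exists>A'. A ** A' = mat 1 \<and> A' ** A = mat 1" using assms by (simp add: invertible_def)
  then have "A ** matrix_inv A = mat 1 \<and> matrix_inv A ** A = mat 1"
    unfolding matrix_inv_def by (rule someI_ex)
  then show "A ** matrix_inv A = mat 1" "matrix_inv A ** A = mat 1" by auto
qed

lemma matrix_inv_unique:
  fixes A B :: "'a::semiring_1^'n^'n"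
  assumes "invertible A" "A ** B = mat 1"
  shows "matrix_inv A = B"
  by (metis assms matrix_inv_left matrix_mul_assoc matrix_mul_lid matrix_mul_rid)

lemma matrix_inv_mult:
  fixes A B :: "'a::semiring_1^'n^'n"
  assumes "invertible A" "invertible B"
  shows "matrix_inv (A ** B) = matrix_inv B ** matrix_inv A"
proof (rule matrix_inv_unique)
  show "invertible (A ** B)" using assms by (rule invertible_mult)
  have "A ** B ** (matrix_inv B ** matrix_inv A) = A ** (B ** matrix_inv B) ** matrix_inv A"
    by (simp add: matrix_mul_assoc)
  then show "A ** B ** (matrix_inv B ** matrix_inv A) = mat 1"
    by (simp add: matrix_inv_right assms)
qed

lemma invertible_mat_1: "invertible (mat 1 :: 'a::semiring_1^'n^'n)"
  unfolding invertible_def by (rule exI[of _ "mat 1"]) simp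

lemma invertible_map_mat_ring_hom:
  fixes A :: "'a::comm_ring_1^'n^'n" and h :: "'a \<Rightarrow> 'b::comm_ring_1"
  assumes h: "is_ring_hom h" and A: "invertible A"
  shows "invertible (map_mat h A)"
  unfolding invertible_def
  by (rule exI[of _ "map_mat h (matrix_inv A)"])
    (simp add: map_mat_ring_hom_mult[OF h, symmetric] matrix_inv_right[OF A] matrix_inv_left[OF A]
      map_mat_ring_hom_mat_1[OF h])

lemma map_mat_ring_hom_matrix_inv:
  fixes A :: "'a::comm_ring_1^'n^'n" and h :: "'a \<Rightarrow> 'b::comm_ring_1"
  assumes h: "is_ring_hom h" and A: "invertible A"
  shows "map_mat h (matrix_inv A) = matrix_inv (map_mat h A)"
  by (rule matrix_inv_unique[OF invertible_map_mat_ring_hom[OF h A], symmetric])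
    (simp add: map_mat_ring_hom_mult[OF h, symmetric] matrix_inv_right[OF A]
      map_mat_ring_hom_mat_1[OF h])

lemma map_mat_derivation_matrix_inv:
  fixes J :: "'a::field^'n^'n"
  assumes D: "is_derivation D" and J: "invertible J"
  shows "map_mat D (matrix_inv J) = - (matrix_inv J ** map_mat D J ** matrix_inv J)"
proof -
  let ?Ji = "matrix_inv J"
  have "map_mat D (J ** ?Ji) = 0"
    by (simp add: matrix_inv_right[OF J] vec_eq_iff mat_def derivation_0[OF D] derivation_1[OF D])
  then have "J ** map_mat D ?Ji = - (map_mat D J ** ?Ji)"
    by (simp add: map_mat_derivation_mult[OF D] eq_neg_iff_add_eq_0 add.commute)
  then have "?Ji ** (J ** map_mat D ?Ji) = - (?Ji ** map_mat D J ** ?Ji)"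
    by (simp add: matrix_mul_assoc matrix_mul_uminus_right)
  moreover have "?Ji ** (J ** map_mat D ?Ji) = map_mat D ?Ji"
    by (simp add: matrix_mul_assoc matrix_inv_left[OF J])
  ultimately show ?thesis by simp
qed

section \<open>Polynomials in finitely many variables\<close>

lemma mp_const_add: "mp_const (a + b) = mp_const a + mp_const b"
  by (simp add: mp_const_def single_add)

lemma mp_const_mult: "mp_const (a * b) = mp_const a * mp_const b"
  by (simp add: mp_const_def mult_single)

lemma mp_const_0 [simp]: "mp_const 0 = 0"
  by (simp add: mp_const_def)

lemma mp_const_1 [simp]: "mp_const 1 = 1"
  by (simp add: mp_const_def)

lemma mp_const_eq_iff: "mp_const a = mp_const b \<longleftrightarrow> a = b"
  by (metis mp_const_def lookup_single_eq)

lemma mp_const_of_nat: "mp_const (of_nat k) = of_nat k"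
  by (simp add: mp_const_def)

lemma mp_const_sum: "mp_const (\<Sum>i\<in>A. f i) = (\<Sum>i\<in>A. mp_const (f i))"
  by (induction A rule: infinite_finite_induct) (simp_all add: mp_const_add)

lemma lookup_mp_const_mult: "Poly_Mapping.lookup (mp_const c * q) m = c * Poly_Mapping.lookup q m"
proof -
  have "mp_const c * q = Poly_Mapping.map ((*) c) q"
    by (simp add: mp_const_def mult_map_scale_conv_mult)
  then show ?thesis by (simp add: map.rep_eq when_def)
qed

lemma poly_mapping_eq_sum_single:
  fixes p :: "'a \<Rightarrow>\<^sub>0 'b::comm_monoid_add"
  assumes "finite A" "Poly_Mapping.keys p \<subseteq> A"
  shows "p = (\<Sum>m\<in>A. Poly_Mapping.single m (Poly_Mapping.lookup p m))"
proof (rule poly_mapping_eqI)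
  fix k
  have "Poly_Mapping.lookup (\<Sum>m\<in>A. Poly_Mapping.single m (Poly_Mapping.lookup p m)) k
      = (\<Sum>m\<in>A. (Poly_Mapping.lookup p m when m = k))"
    by (simp add: lookup_sum lookup_single)
  also have "\<dots> = Poly_Mapping.lookup p k"
    using assms by (cases "k \<in> A") (auto simp: when_def in_keys_iff)
  finally show "Poly_Mapping.lookup p k
      = Poly_Mapping.lookup (\<Sum>m\<in>A. Poly_Mapping.single m (Poly_Mapping.lookup p m)) k" ..
qed

lemma prod_single_one:
  assumes "finite A"
  shows "(\<Prod>i\<in>A. Poly_Mapping.single (f i) (1::'b::comm_semiring_1)) = Poly_Mapping.single (\<Sum>i\<in>A. f i) 1"
  using assms by (induction A rule: finite_induct) (simp_all add: mult_single)

lemma mp_var_power: "mp_var i ^ k = Poly_Mapping.single (Poly_Mapping.single i k) 1"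
  by (induction k) (simp_all add: mp_var_def mult_single single_add[symmetric] add.commute)

lemma single_eq_mp_const_mult_monomial:
  fixes m :: "'n::finite \<Rightarrow>\<^sub>0 nat"
  shows "Poly_Mapping.single m c = mp_const c * (\<Prod>i\<in>UNIV. mp_var i ^ Poly_Mapping.lookup m i)"
proof -
  have "(\<Sum>i\<in>UNIV. Poly_Mapping.single i (Poly_Mapping.lookup m i)) = m"
    using poly_mapping_eq_sum_single[of UNIV m] by simp
  then show ?thesis
    by (simp add: mp_var_power prod_single_one mp_const_def mult_single)
qed

lemma mpoly_induct [case_names const var add mult]:
  fixes P :: "'n::finite mpoly \<Rightarrow> bool"
  assumes const: "\<And>c. P (mp_const c)" and var: "\<And>i. P (mp_var i)"
    and add: "\<And>p q. P p \<Longrightarrow> P q \<Longrightarrow> P (p + q)"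
    and mult: "\<And>p q. P p \<Longrightarrow> P q \<Longrightarrow> P (p * q)"
  shows "P p"
proof -
  have P0: "P 0" and P1: "P 1" using const[of 0] const[of 1] by simp_all
  have P_prod: "P (\<Prod>i\<in>B. f i)" if "finite B" "\<And>i. P (f i)" for B and f :: "'n \<Rightarrow> 'n mpoly"
    using that by (induction B rule: finite_induct) (simp_all add: P1 mult)
  have P_sum: "P (\<Sum>i\<in>B. f i)" if "finite B" "\<And>i. i \<in> B \<Longrightarrow> P (f i)"
    for B and f :: "('n \<Rightarrow>\<^sub>0 nat) \<Rightarrow> 'n mpoly"
    using that by (induction B rule: finite_induct) (simp_all add: P0 add)
  have "P (mp_var i ^ k)" for i k
    by (induction k) (simp_all add: P1 mult var)
  then have "P (Poly_Mapping.single m c)" for m c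
    unfolding single_eq_mp_const_mult_monomial by (intro mult const P_prod) auto
  then have "P (\<Sum>m\<in>Poly_Mapping.keys p. Poly_Mapping.single m (Poly_Mapping.lookup p m))"
    by (intro P_sum) auto
  then show ?thesis
    using poly_mapping_eq_sum_single[of "Poly_Mapping.keys p" p] by simp
qed

definition eval_monom :: "('n::finite \<Rightarrow> 'm mpoly) \<Rightarrow> ('n \<Rightarrow>\<^sub>0 nat) \<Rightarrow> 'm mpoly" where
  "eval_monom s m = (\<Prod>i\<in>UNIV. s i ^ Poly_Mapping.lookup m i)"

lemma eval_monom_add: "eval_monom s (a + b) = eval_monom s a * eval_monom s b"
  by (simp add: eval_monom_def lookup_add power_add prod.distrib)

lemma eval_monom_0 [simp]: "eval_monom s 0 = 1"
  by (simp add: eval_monom_def)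

lemma eval_monom_single_1: "eval_monom s (Poly_Mapping.single i 1) = s i"
proof -
  have "eval_monom s (Poly_Mapping.single i 1) = (\<Prod>j\<in>UNIV. if j = i then s i else 1)"
    unfolding eval_monom_def by (rule prod.cong) (auto simp: lookup_single when_def)
  then show ?thesis by (simp add: prod.delta)
qed

lemma mp_subst_eq_sum:
  assumes "finite A" "Poly_Mapping.keys p \<subseteq> A"
  shows "mp_subst s p = (\<Sum>m\<in>A. mp_const (Poly_Mapping.lookup p m) * eval_monom s m)"
  unfolding mp_subst_def eval_monom_def
  by (rule sum.mono_neutral_left) (use assms in \<open>auto simp: in_keys_iff\<close>)

lemma mp_subst_0 [simp]: "mp_subst s 0 = 0"
  by (simp add: mp_subst_def)

lemma mp_subst_add: "mp_subst s (p + q) = mp_subst s p + mp_subst s q"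
proof -
  let ?A = "Poly_Mapping.keys p \<union> Poly_Mapping.keys q"
  have "Poly_Mapping.keys (p + q) \<subseteq> ?A" by (rule keys_add)
  then show ?thesis
    by (simp add: mp_subst_eq_sum[of ?A] lookup_add mp_const_add distrib_right sum.distrib)
qed

lemma mp_subst_sum: "mp_subst s (\<Sum>i\<in>B. f i) = (\<Sum>i\<in>B. mp_subst s (f i))"
  by (induction B rule: infinite_finite_induct) (simp_all add: mp_subst_add)

lemma mp_subst_single: "mp_subst s (Poly_Mapping.single m c) = mp_const c * eval_monom s m"
  by (subst mp_subst_eq_sum[of "{m}"]) auto

lemma mp_subst_mult: "mp_subst s (p * q) = mp_subst s p * mp_subst s q"
proof -
  let ?sp = "\<lambda>a. Poly_Mapping.single a (Poly_Mapping.lookup p a)"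
  let ?sq = "\<lambda>b. Poly_Mapping.single b (Poly_Mapping.lookup q b)"
  let ?P = "Poly_Mapping.keys p" and ?Q = "Poly_Mapping.keys q"
  have p: "p = (\<Sum>a\<in>?P. ?sp a)" and q: "q = (\<Sum>b\<in>?Q. ?sq b)"
    by (rule poly_mapping_eq_sum_single; simp)+
  have "mp_subst s (p * q) = (\<Sum>a\<in>?P. \<Sum>b\<in>?Q. mp_subst s (?sp a * ?sq b))"
    by (subst (1) p, subst (1) q) (simp add: sum_product mp_subst_sum)
  also have "\<dots> = (\<Sum>a\<in>?P. \<Sum>b\<in>?Q. mp_subst s (?sp a) * mp_subst s (?sq b))"
    by (simp add: mult_single mp_subst_single eval_monom_add mp_const_mult mult_ac)
  also have "\<dots> = mp_subst s p * mp_subst s q"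
    by (subst (3) p, subst (3) q) (simp add: mp_subst_sum sum_product)
  finally show ?thesis .
qed

lemma mp_subst_const [simp]: "mp_subst s (mp_const c) = mp_const c"
  by (simp add: mp_const_def mp_subst_single)

lemma mp_subst_var [simp]: "mp_subst s (mp_var i) = s i"
  unfolding mp_var_def mp_subst_single eval_monom_single_1 by simp

lemma mp_subst_mp_subst: "mp_subst s (mp_subst t p) = mp_subst (\<lambda>i. mp_subst s (t i)) p"
  by (induction p rule: mpoly_induct) (simp_all add: mp_subst_add mp_subst_mult)

lemma mp_subst_mp_var [simp]: "mp_subst mp_var p = p"
  by (induction p rule: mpoly_induct) (simp_all add: mp_subst_add mp_subst_mult)

abbreviation unit_monom :: "'n \<Rightarrow> 'n \<Rightarrow>\<^sub>0 nat" where
  "unit_monom j \<equiv> Poly_Mapping.single j 1"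

lemma mp_pderiv_eq_sum:
  assumes "finite A" "Poly_Mapping.keys p \<subseteq> A"
  shows "mp_pderiv j p = (\<Sum>m\<in>A. Poly_Mapping.single (m - unit_monom j)
           (of_nat (Poly_Mapping.lookup m j) * Poly_Mapping.lookup p m))"
  unfolding mp_pderiv_def
  by (rule sum.mono_neutral_left) (use assms in \<open>auto simp: in_keys_iff\<close>)

lemma mp_pderiv_0 [simp]: "mp_pderiv j 0 = 0"
  by (simp add: mp_pderiv_def)

lemma mp_pderiv_add: "mp_pderiv j (p + q) = mp_pderiv j p + mp_pderiv j q"
proof -
  let ?A = "Poly_Mapping.keys p \<union> Poly_Mapping.keys q"
  have "Poly_Mapping.keys (p + q) \<subseteq> ?A" by (rule keys_add)
  then show ?thesis
    by (simp add: mp_pderiv_eq_sum[of ?A] lookup_add distrib_left single_add sum.distrib)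
qed

lemma mp_pderiv_sum: "mp_pderiv j (\<Sum>i\<in>B. f i) = (\<Sum>i\<in>B. mp_pderiv j (f i))"
  by (induction B rule: infinite_finite_induct) (simp_all add: mp_pderiv_add)

lemma mp_pderiv_single:
  "mp_pderiv j (Poly_Mapping.single m c)
     = Poly_Mapping.single (m - unit_monom j) (of_nat (Poly_Mapping.lookup m j) * c)"
  by (subst mp_pderiv_eq_sum[of "{m}"]) auto

lemma single_add_diff_unit_monom:
  "Poly_Mapping.single (a + (b - unit_monom j)) (of_nat (Poly_Mapping.lookup b j) * c)
   = Poly_Mapping.single (a + b - unit_monom j) (of_nat (Poly_Mapping.lookup b j) * c)"
proof (cases "Poly_Mapping.lookup b j > 0")
  case True
  then have "a + (b - unit_monom j) = a + b - unit_monom j"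
    by (intro poly_mapping_eqI) (auto simp: lookup_add lookup_minus lookup_single when_def)
  then show ?thesis by simp
qed simp

lemma mp_pderiv_single_mult:
  "mp_pderiv j (Poly_Mapping.single a c * Poly_Mapping.single b d)
   = Poly_Mapping.single a c * mp_pderiv j (Poly_Mapping.single b d)
     + Poly_Mapping.single b d * mp_pderiv j (Poly_Mapping.single a c)"
proof -
  have e1: "Poly_Mapping.single a c * mp_pderiv j (Poly_Mapping.single b d)
     = Poly_Mapping.single (a + b - unit_monom j) (of_nat (Poly_Mapping.lookup b j) * (c * d))"
    using single_add_diff_unit_monom[of a b j "c * d"]
    by (simp add: mp_pderiv_single mult_single mult_ac)
  have e2: "Poly_Mapping.single b d * mp_pderiv j (Poly_Mapping.single a c)
     = Poly_Mapping.single (a + b - unit_monom j) (of_nat (Poly_Mapping.lookup a j) * (c * d))"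
    using single_add_diff_unit_monom[of b a j "c * d"]
    by (simp add: mp_pderiv_single mult_single mult_ac add.commute)
  show ?thesis
    unfolding e1 e2
    by (simp add: mp_pderiv_single mult_single lookup_add single_add[symmetric] distrib_right
        add.commute)
qed

lemma mp_pderiv_mult: "mp_pderiv j (p * q) = p * mp_pderiv j q + q * mp_pderiv j p"
proof -
  let ?sp = "\<lambda>a. Poly_Mapping.single a (Poly_Mapping.lookup p a)"
  let ?sq = "\<lambda>b. Poly_Mapping.single b (Poly_Mapping.lookup q b)"
  let ?P = "Poly_Mapping.keys p" and ?Q = "Poly_Mapping.keys q"
  have p: "p = (\<Sum>a\<in>?P. ?sp a)" and q: "q = (\<Sum>b\<in>?Q. ?sq b)"
    by (rule poly_mapping_eq_sum_single; simp)+
  have "p * q = (\<Sum>a\<in>?P. \<Sum>b\<in>?Q. ?sp a * ?sq b)"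
    by (subst p, subst q) (simp add: sum_product)
  then have "mp_pderiv j (p * q) = (\<Sum>a\<in>?P. \<Sum>b\<in>?Q. mp_pderiv j (?sp a * ?sq b))"
    by (simp add: mp_pderiv_sum)
  also have "\<dots> = (\<Sum>a\<in>?P. \<Sum>b\<in>?Q. ?sp a * mp_pderiv j (?sq b))
                + (\<Sum>a\<in>?P. \<Sum>b\<in>?Q. ?sq b * mp_pderiv j (?sp a))"
    by (simp add: mp_pderiv_single_mult sum.distrib)
  also have "\<dots> = (\<Sum>a\<in>?P. ?sp a) * mp_pderiv j (\<Sum>b\<in>?Q. ?sq b)
                + (\<Sum>b\<in>?Q. ?sq b) * mp_pderiv j (\<Sum>a\<in>?P. ?sp a)"
    by (simp add: mp_pderiv_sum sum_product sum_distrib_left sum_distrib_right mult_ac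
        sum.swap[of _ ?P ?Q])
  finally show ?thesis using p q by simp
qed

lemma mp_pderiv_const [simp]: "mp_pderiv j (mp_const c) = 0"
  by (simp add: mp_const_def mp_pderiv_single)

lemma mp_pderiv_var: "mp_pderiv j (mp_var i) = (if i = j then 1 else 0)"
  by (simp add: mp_var_def mp_pderiv_single lookup_single when_def)

lemma mp_pderiv_diff: "mp_pderiv j (p - q) = mp_pderiv j p - mp_pderiv j q"
  using mp_pderiv_add[of j "p - q" q] by (simp add: eq_diff_eq)

definition euler_op :: "'n \<Rightarrow> 'n mpoly \<Rightarrow> 'n mpoly" where
  "euler_op l f = mp_var l * mp_pderiv l f"

lemma euler_op_diff: "euler_op l (p - q) = euler_op l p - euler_op l q"
  by (simp add: euler_op_def mp_pderiv_diff right_diff_distrib)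

lemma euler_op_mp_const_mult: "euler_op l (mp_const c * q) = mp_const c * euler_op l q"
  by (simp add: euler_op_def mp_pderiv_mult mult_ac)

lemma lookup_euler_op:
  "Poly_Mapping.lookup (euler_op l f) m = of_nat (Poly_Mapping.lookup m l) * Poly_Mapping.lookup f m"
proof -
  have shift: "mp_var l * Poly_Mapping.single (m' - unit_monom l) (of_nat (Poly_Mapping.lookup m' l) * c)
      = Poly_Mapping.single m' (of_nat (Poly_Mapping.lookup m' l) * c)" for m' c
  proof (cases "Poly_Mapping.lookup m' l > 0")
    case True
    then have "unit_monom l + (m' - unit_monom l) = m'"
      by (intro poly_mapping_eqI) (auto simp: lookup_add lookup_minus lookup_single when_def)
    then show ?thesis by (simp add: mp_var_def mult_single)
  qed simp
  have "euler_op l f = (\<Sum>m'\<in>Poly_Mapping.keys f.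
      Poly_Mapping.single m' (of_nat (Poly_Mapping.lookup m' l) * Poly_Mapping.lookup f m'))"
    unfolding euler_op_def mp_pderiv_def sum_distrib_left shift ..
  then show ?thesis
    by (cases "m \<in> Poly_Mapping.keys f") (auto simp: lookup_sum lookup_single when_def in_keys_iff)
qed

lemma keys_euler_op: "Poly_Mapping.keys (euler_op l f) \<subseteq> Poly_Mapping.keys f"
  by (auto simp: in_keys_iff lookup_euler_op)

lemma sum_euler_op_homogeneous:
  assumes "\<And>m. m \<in> Poly_Mapping.keys f \<Longrightarrow> (\<Sum>i\<in>UNIV. Poly_Mapping.lookup m i) = d"
  shows "(\<Sum>l\<in>UNIV. euler_op l f) = of_nat d * f"
proof (rule poly_mapping_eqI)
  fix m
  have "Poly_Mapping.lookup (\<Sum>l\<in>UNIV. euler_op l f) m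
      = (\<Sum>l\<in>UNIV. of_nat (Poly_Mapping.lookup m l)) * Poly_Mapping.lookup f m"
    by (simp add: lookup_sum lookup_euler_op sum_distrib_right)
  also have "\<dots> = of_nat d * Poly_Mapping.lookup f m"
    using assms[of m] by (cases "m \<in> Poly_Mapping.keys f") (auto simp: in_keys_iff)
  also have "\<dots> = Poly_Mapping.lookup (of_nat d * f) m"
    using lookup_mp_const_mult[of "of_nat d" f m] by (simp add: mp_const_of_nat)
  finally show "Poly_Mapping.lookup (\<Sum>l\<in>UNIV. euler_op l f) m = Poly_Mapping.lookup (of_nat d * f) m" .
qed

text \<open>The order on monomials is the lexicographic order of HOL-Library.Poly_Mapping; all that
  matters is that it is a linear order compatible with addition.\<close>

definition lead_monom :: "'n::linorder mpoly \<Rightarrow> ('n \<Rightarrow>\<^sub>0 nat)" where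
  "lead_monom f = Max (Poly_Mapping.keys f)"

lemma lead_monom_in_keys: "f \<noteq> 0 \<Longrightarrow> lead_monom f \<in> Poly_Mapping.keys f"
  unfolding lead_monom_def by (rule Max_in) auto

lemma keys_le_lead_monom: "Poly_Mapping.keys f \<subseteq> {x. x \<le> lead_monom f}"
  unfolding lead_monom_def by auto

lemma lookup_mult_maximal:
  fixes f g :: "'n::linorder mpoly"
  assumes f: "Poly_Mapping.keys f \<subseteq> {x. x \<le> a}" and g: "Poly_Mapping.keys g \<subseteq> {y. y \<le> b}"
  shows "Poly_Mapping.lookup (f * g) (a + b) = Poly_Mapping.lookup f a * Poly_Mapping.lookup g b"
proof -
  let ?F = "Poly_Mapping.keys f" and ?G = "Poly_Mapping.keys g"
  have sum_eq: "x + y = a + b \<longleftrightarrow> x = a \<and> y = b" if "x \<in> ?F" "y \<in> ?G" for x y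
  proof -
    have le: "x \<le> a" "y \<le> b" using that f g by auto
    have "x + y < a + b" if "x \<noteq> a \<or> y \<noteq> b"
    proof (cases "x = a")
      case True
      then show ?thesis using that le by (simp add: order_le_neq_trans)
    next
      case False
      then show ?thesis using le by (simp add: add_less_le_mono order_le_neq_trans)
    qed
    then show ?thesis by (metis less_irrefl)
  qed
  have "f * g = (\<Sum>x\<in>?F. \<Sum>y\<in>?G.
      Poly_Mapping.single (x + y) (Poly_Mapping.lookup f x * Poly_Mapping.lookup g y))"
    by (subst poly_mapping_eq_sum_single[of ?F f], simp, simp,
        subst poly_mapping_eq_sum_single[of ?G g], simp, simp)
      (simp add: sum_product mult_single)
  then have "Poly_Mapping.lookup (f * g) (a + b) = (\<Sum>x\<in>?F. \<Sum>y\<in>?G.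
      (if x = a \<and> y = b then Poly_Mapping.lookup f x * Poly_Mapping.lookup g y else 0))"
    by (simp add: lookup_sum lookup_single when_def sum_eq cong: sum.cong)
  also have "\<dots> = (\<Sum>x\<in>?F. if x = a then (\<Sum>y\<in>?G.
      if y = b then Poly_Mapping.lookup f x * Poly_Mapping.lookup g y else 0) else 0)"
    by (rule sum.cong) auto
  also have "\<dots> = Poly_Mapping.lookup f a * Poly_Mapping.lookup g b"
    by (simp add: sum.delta in_keys_iff)
  finally show ?thesis .
qed

lemma lead_monom_eq_if_euler_proportional:
  fixes p q :: "'n::linorder mpoly"
  assumes p: "p \<noteq> 0" and q: "q \<noteq> 0" and E: "\<And>l. q * euler_op l p = p * euler_op l q"
  shows "lead_monom p = lead_monom q"
proof (rule poly_mapping_eqI)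
  fix l
  let ?a = "lead_monom p" and ?b = "lead_monom q"
  let ?pa = "Poly_Mapping.lookup p ?a" and ?qb = "Poly_Mapping.lookup q ?b"
  have kp: "Poly_Mapping.keys (euler_op l p) \<subseteq> {x. x \<le> ?a}"
    and kq: "Poly_Mapping.keys (euler_op l q) \<subseteq> {x. x \<le> ?b}"
    by (rule order_trans[OF keys_euler_op keys_le_lead_monom])+
  have "Poly_Mapping.lookup (q * euler_op l p) (?b + ?a) = ?qb * (of_nat (Poly_Mapping.lookup ?a l) * ?pa)"
    by (simp add: lookup_mult_maximal[OF keys_le_lead_monom kp] lookup_euler_op)
  moreover have "Poly_Mapping.lookup (p * euler_op l q) (?a + ?b) = ?pa * (of_nat (Poly_Mapping.lookup ?b l) * ?qb)"
    by (simp add: lookup_mult_maximal[OF keys_le_lead_monom kq] lookup_euler_op)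
  ultimately have "?qb * ?pa * of_nat (Poly_Mapping.lookup ?a l) = ?qb * ?pa * of_nat (Poly_Mapping.lookup ?b l)"
    using E[of l] by (auto simp add: add.commute mult_ac)
  moreover have "?qb * ?pa \<noteq> 0"
    using lead_monom_in_keys[OF p] lead_monom_in_keys[OF q] by (simp add: in_keys_iff)
  ultimately show "Poly_Mapping.lookup ?a l = Poly_Mapping.lookup ?b l" by simp
qed

text \<open>The polynomial form of: a rational function \<open>p/q\<close> all of whose partial derivatives vanish
  is constant. Subtracting the right multiple of \<open>q\<close> cancels the common leading monomial, which
  the previous lemma forbids unless the difference is zero.\<close>

lemma const_multiple_if_euler_proportional:
  fixes p q :: "'n::linorder mpoly"
  assumes q: "q \<noteq> 0" and E: "\<And>l. q * euler_op l p = p * euler_op l q"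
  shows "\<exists>c. p = mp_const c * q"
proof -
  define c where "c = Poly_Mapping.lookup p (lead_monom q) / Poly_Mapping.lookup q (lead_monom q)"
  define r where "r = p - mp_const c * q"
  have "Poly_Mapping.lookup q (lead_monom q) \<noteq> 0"
    using lead_monom_in_keys[OF q] by (simp add: in_keys_iff)
  then have "Poly_Mapping.lookup r (lead_monom q) = 0"
    by (simp add: r_def lookup_minus lookup_mp_const_mult c_def)
  moreover have "q * euler_op l r = r * euler_op l q" for l
    unfolding r_def euler_op_diff euler_op_mp_const_mult using E[of l] by (simp add: algebra_simps)
  ultimately have "r = 0"
    using lead_monom_eq_if_euler_proportional[OF _ q] lead_monom_in_keys
    by (metis in_keys_iff)
  then show ?thesis unfolding r_def by auto
qed

definition lin_form :: "complex^'n^'n \<Rightarrow> 'n \<Rightarrow> 'n::finite mpoly" where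
  "lin_form B j = (\<Sum>k\<in>UNIV. mp_const (B $ j $ k) * mp_var k)"

definition lin_subst :: "complex^'n^'n \<Rightarrow> 'n::finite mpoly \<Rightarrow> 'n mpoly" where
  "lin_subst B = mp_subst (lin_form B)"

lemma gamma_eq_lin_subst: "gamma M = lin_subst (matrix_inv M)"
  by (simp add: fun_eq_iff gamma_def lin_subst_def lin_form_def[abs_def])

lemma lin_subst_add: "lin_subst B (p + q) = lin_subst B p + lin_subst B q"
  by (simp add: lin_subst_def mp_subst_add)

lemma lin_subst_mult: "lin_subst B (p * q) = lin_subst B p * lin_subst B q"
  by (simp add: lin_subst_def mp_subst_mult)

lemma lin_subst_const [simp]: "lin_subst B (mp_const c) = mp_const c"
  by (simp add: lin_subst_def)

lemma lin_subst_0 [simp]: "lin_subst B 0 = 0"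
  by (simp add: lin_subst_def)

lemma lin_subst_1 [simp]: "lin_subst B 1 = 1"
  using lin_subst_const[of B 1] by simp

lemma lin_subst_lin_form: "lin_subst B (lin_form C j) = lin_form (C ** B) j"
proof -
  have "lin_subst B (lin_form C j)
      = (\<Sum>k\<in>UNIV. \<Sum>l\<in>UNIV. mp_const (C $ j $ k * B $ k $ l) * mp_var l)"
    by (simp add: lin_subst_def lin_form_def mp_subst_sum mp_subst_mult sum_distrib_left
        mp_const_mult mult_ac)
  also have "\<dots> = lin_form (C ** B) j"
    by (subst sum.swap) (simp add: lin_form_def matrix_matrix_mult_def mp_const_sum sum_distrib_right)
  finally show ?thesis .
qed

lemma lin_subst_lin_subst: "lin_subst B (lin_subst C f) = lin_subst (C ** B) f"
  by (simp add: lin_subst_def mp_subst_mp_subst lin_subst_lin_form[unfolded lin_subst_def])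

lemma lin_subst_mat1 [simp]: "lin_subst (mat 1) (f :: 'n::finite mpoly) = f"
proof -
  have "lin_form (mat 1 :: complex^'n^'n) j = (\<Sum>k\<in>UNIV. if k = j then mp_var k else 0)" for j
    unfolding lin_form_def by (rule sum.cong) (auto simp: mat_def)
  then have "lin_form (mat 1 :: complex^'n^'n) = mp_var" by auto
  then show ?thesis by (simp add: lin_subst_def)
qed

lemma mp_pderiv_lin_form: "mp_pderiv l (lin_form B i) = mp_const (B $ i $ l)"
proof -
  have "mp_pderiv l (lin_form B i) = (\<Sum>k\<in>UNIV. if k = l then mp_const (B $ i $ k) else 0)"
    unfolding lin_form_def mp_pderiv_sum
    by (rule sum.cong) (auto simp: mp_pderiv_mult mp_pderiv_var)
  then show ?thesis by simp
qed

lemma mp_pderiv_lin_subst: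
  "mp_pderiv l (lin_subst B f) = (\<Sum>m\<in>UNIV. lin_subst B (mp_pderiv m f) * mp_const (B $ m $ l))"
proof (induction f rule: mpoly_induct)
  case (var i)
  have "(\<Sum>m\<in>UNIV. lin_subst B (mp_pderiv m (mp_var i)) * mp_const (B $ m $ l))
      = (\<Sum>m\<in>UNIV. if m = i then mp_const (B $ m $ l) else 0)"
    by (rule sum.cong) (auto simp: mp_pderiv_var)
  then show ?case by (simp add: lin_subst_def mp_pderiv_lin_form[unfolded lin_subst_def])
next
  case (add p q)
  then show ?case by (simp add: lin_subst_add mp_pderiv_add sum.distrib distrib_right)
next
  case (mult p q)
  then show ?case
    by (simp add: lin_subst_add lin_subst_mult mp_pderiv_mult sum_distrib_left
        sum.distrib[symmetric] algebra_simps)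
qed simp

lemma gamma_gamma:
  assumes "invertible N" "invertible M"
  shows "gamma N (gamma M f) = gamma (N ** M) f"
  by (simp add: gamma_eq_lin_subst lin_subst_lin_subst matrix_inv_mult assms)

lemma gamma_mat_1 [simp]: "gamma (mat 1) f = f"
  by (simp add: gamma_eq_lin_subst matrix_inv_unique[OF invertible_mat_1])

lemma gamma_eq_0_iff:
  assumes "invertible M"
  shows "gamma M f = 0 \<longleftrightarrow> f = 0"
proof
  assume "gamma M f = 0"
  have "f = lin_subst (matrix_inv M ** M) f" by (simp add: matrix_inv_left assms)
  also have "\<dots> = lin_subst M (gamma M f)" by (simp add: gamma_eq_lin_subst lin_subst_lin_subst)
  finally show "f = 0" using \<open>gamma M f = 0\<close> by simp
qed (simp add: gamma_eq_lin_subst)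

lemma gamma_const [simp]: "gamma M (mp_const c) = mp_const c"
  by (simp add: gamma_eq_lin_subst)

lemma is_ring_hom_gamma: "is_ring_hom (gamma M)"
  by (simp add: is_ring_hom_def gamma_eq_lin_subst lin_subst_add lin_subst_mult)

section \<open>Rational functions\<close>

lemma to_ratf_add: "to_ratf (p + q) = to_ratf p + to_ratf q"
  by (simp add: to_ratf_def)

lemma to_ratf_mult: "to_ratf (p * q) = to_ratf p * to_ratf q"
  by (simp add: to_ratf_def)

lemma to_ratf_0 [simp]: "to_ratf 0 = 0"
  by (simp add: to_ratf_def fract_collapse)

lemma to_ratf_1 [simp]: "to_ratf 1 = 1"
  by (simp add: to_ratf_def One_fract_def)

lemma to_ratf_eq_iff: "to_ratf p = to_ratf q \<longleftrightarrow> p = q"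
  by (simp add: to_ratf_def eq_fract)

lemma to_ratf_sum: "to_ratf (\<Sum>i\<in>A. f i) = (\<Sum>i\<in>A. to_ratf (f i))"
  by (induction A rule: infinite_finite_induct) (simp_all add: to_ratf_add)

lemma to_ratf_of_nat: "to_ratf (of_nat n) = of_nat n"
  by (induction n) (simp_all add: to_ratf_add)

lemma Fract_eq_to_ratf_divide: "q \<noteq> 0 \<Longrightarrow> Fract p q = to_ratf p / to_ratf q"
  by (simp add: to_ratf_def)

lemma of_nat_ratf_neq_0: "n > 0 \<Longrightarrow> (of_nat n :: 'n::{finite,linorder} ratf) \<noteq> 0"
  by (metis mp_const_eq_iff mp_const_of_nat mp_const_0 of_nat_0_eq_iff neq0_conv
      to_ratf_0 to_ratf_eq_iff to_ratf_of_nat)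

abbreviation ratf_var :: "'n::{finite,linorder} \<Rightarrow> 'n ratf" where
  "ratf_var l \<equiv> to_ratf (mp_var l)"

abbreviation ratf_const :: "complex \<Rightarrow> 'n::{finite,linorder} ratf" where
  "ratf_const c \<equiv> to_ratf (mp_const c)"

lemma is_ring_hom_ratf_const: "is_ring_hom (ratf_const :: complex \<Rightarrow> 'n::{finite,linorder} ratf)"
  by (simp add: is_ring_hom_def mp_const_add mp_const_mult to_ratf_add to_ratf_mult)

lemma is_ring_derivation_mp_pderiv: "is_ring_derivation (mp_pderiv j)"
  by (simp add: is_ring_derivation_def mp_pderiv_add mp_pderiv_mult)

definition ratf_pderiv :: "'n::{finite,linorder} \<Rightarrow> 'n ratf \<Rightarrow> 'n ratf" where
  "ratf_pderiv l = fract_derivation (mp_pderiv l)"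

lemma is_derivation_ratf_pderiv: "is_derivation (ratf_pderiv l)"
  unfolding ratf_pderiv_def by (rule is_derivation_fract_derivation[OF is_ring_derivation_mp_pderiv])

lemma ratf_pderiv_to_ratf: "ratf_pderiv l (to_ratf p) = to_ratf (mp_pderiv l p)"
  unfolding ratf_pderiv_def to_ratf_def
  by (rule fract_derivation_Fract_1[OF is_ring_derivation_mp_pderiv])

lemma ratf_pderiv_var: "ratf_pderiv l (ratf_var m) = (if m = l then 1 else 0)"
  by (simp add: ratf_pderiv_to_ratf mp_pderiv_var)

lemma ratf_pderiv_const: "ratf_pderiv l (ratf_const c) = 0"
  by (simp add: ratf_pderiv_to_ratf)

lemma derivation_ratf_eq_0:
  fixes x :: "'n::{finite,linorder} ratf"
  assumes D: "is_derivation D" and const: "\<And>c. D (ratf_const c) = 0"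
    and var: "\<And>l. D (ratf_var l) = 0"
  shows "D x = 0"
proof -
  have poly: "D (to_ratf p) = 0" for p
    by (induction p rule: mpoly_induct)
      (simp_all add: const var to_ratf_add to_ratf_mult derivation_add[OF D] derivation_mult[OF D])
  obtain p q where "x = Fract p q" "q \<noteq> 0" by (cases x)
  then have "x = to_ratf p * inverse (to_ratf q)"
    by (simp add: Fract_eq_to_ratf_divide divide_inverse)
  then show ?thesis
    by (simp add: derivation_mult[OF D] derivation_inverse[OF D] poly)
qed

lemma subfield_ratf_eq_UNIV:
  fixes F :: "'n::{finite,linorder} ratf set"
  assumes F: "is_subfield F" and const: "\<And>c. ratf_const c \<in> F" and var: "\<And>l. ratf_var l \<in> F"
  shows "F = UNIV"
proof -
  have "to_ratf p \<in> F" for p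
    by (induction p rule: mpoly_induct)
      (simp_all add: const var to_ratf_add to_ratf_mult subfield_add[OF F] subfield_mult[OF F])
  then have "x \<in> F" for x
    by (cases x) (simp add: Fract_eq_to_ratf_divide subfield_divide[OF F])
  then show ?thesis by blast
qed

lemma ratf_pderiv_eq_0_imp_const:
  fixes x :: "'n::{finite,linorder} ratf"
  assumes "\<And>l. ratf_pderiv l x = 0"
  shows "\<exists>c. x = ratf_const c"
proof -
  obtain p q where x: "x = Fract p q" and q: "q \<noteq> 0" by (cases x)
  have "q * euler_op l p = p * euler_op l q" for l
  proof -
    have "Fract (q * mp_pderiv l p - p * mp_pderiv l q) (q * q) = 0"
      using assms[of l] q
      by (simp add: x ratf_pderiv_def fract_derivation_Fract[OF is_ring_derivation_mp_pderiv])
    then have "q * mp_pderiv l p - p * mp_pderiv l q = 0"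
      using q by (simp add: Zero_fract_def eq_fract)
    then show ?thesis by (simp add: euler_op_def algebra_simps)
  qed
  then obtain c where "p = mp_const c * q"
    using const_multiple_if_euler_proportional[OF q] by blast
  then have "x = Fract (q * mp_const c) (q * 1)" by (simp add: x mult.commute)
  also have "\<dots> = ratf_const c" unfolding to_ratf_def by (rule mult_fract_cancel[OF q])
  finally show ?thesis by blast
qed

definition ratf_act :: "((complex, 'n::{finite,linorder}) vec, 'n) vec \<Rightarrow> 'n ratf \<Rightarrow> 'n ratf" where
  "ratf_act M = fract_map (gamma M)"

lemma ratf_act_Fract:
  "invertible M \<Longrightarrow> q \<noteq> 0 \<Longrightarrow> ratf_act M (Fract p q) = Fract (gamma M p) (gamma M q)"
  unfolding ratf_act_def by (rule fract_map_Fract[OF is_ring_hom_gamma]) (simp_all add: gamma_eq_0_iff)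

lemma is_ring_hom_ratf_act: "invertible M \<Longrightarrow> is_ring_hom (ratf_act M)"
  unfolding ratf_act_def by (rule is_ring_hom_fract_map[OF is_ring_hom_gamma]) (simp add: gamma_eq_0_iff)

lemma ratf_act_to_ratf: "invertible M \<Longrightarrow> ratf_act M (to_ratf p) = to_ratf (gamma M p)"
  unfolding to_ratf_def by (simp add: ratf_act_Fract gamma_eq_lin_subst)

lemma ratf_act_ratf_act:
  assumes "invertible N" "invertible M"
  shows "ratf_act N (ratf_act M x) = ratf_act (N ** M) x"
proof -
  obtain p q where x: "x = Fract p q" and q: "q \<noteq> 0" by (cases x)
  have "gamma M q \<noteq> 0" using q gamma_eq_0_iff[OF assms(2)] by simp
  then show ?thesis
    using assms q by (simp add: x ratf_act_Fract gamma_gamma invertible_mult)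
qed

lemma ratf_act_mat_1 [simp]: "ratf_act (mat 1) x = x"
proof -
  obtain p q where "x = Fract p q" "q \<noteq> 0" by (cases x)
  then show ?thesis by (simp add: ratf_act_Fract invertible_mat_1)
qed

lemma generated_group_mult:
  assumes "g \<in> generated_group R" "h \<in> generated_group R"
  shows "g ** h \<in> generated_group R"
  using assms(1)
proof induction
  case (gen_mult r g)
  then show ?case by (metis generated_group.gen_mult matrix_mul_assoc)
next
  case (gen_inv r g)
  then show ?case by (metis generated_group.gen_inv matrix_mul_assoc)
qed (simp add: assms(2))

locale finite_matrix_group =
  fixes G :: "('a::field^'n^'n) set"
  assumes finite_G: "finite G"
    and invertible_G: "M \<in> G \<Longrightarrow> invertible M"
    and mat_1_in_G: "mat 1 \<in> G"
    and mult_in_G: "M \<in> G \<Longrightarrow> N \<in> G \<Longrightarrow> M ** N \<in> G"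
begin

lemma bij_betw_mult_left:
  assumes N: "N \<in> G"
  shows "bij_betw (\<lambda>M. N ** M) G G"
proof -
  have "inj_on (\<lambda>M. N ** M) G"
    by (rule inj_onI)
      (metis matrix_mul_assoc matrix_inv_left[OF invertible_G[OF N]] matrix_mul_lid)
  moreover have "(\<lambda>M. N ** M) ` G \<subseteq> G" using mult_in_G N by auto
  ultimately show ?thesis
    using finite_G by (simp add: bij_betw_def endo_inj_surj)
qed

lemma prod_reindex_mult_left: "N \<in> G \<Longrightarrow> (\<Prod>M\<in>G. f (N ** M)) = (\<Prod>M\<in>G. f M)"
  by (rule prod.reindex_bij_betw[OF bij_betw_mult_left])

lemma right_inverse_in_G: "M \<in> G \<Longrightarrow> \<exists>P\<in>G. M ** P = mat 1"
  using bij_betw_mult_left[of M] mat_1_in_G unfolding bij_betw_def by (metis imageE)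

end

lemma finite_matrix_group_if_complex_reflection_group:
  assumes "complex_reflection_group G"
  shows "finite_matrix_group G"
proof -
  have G: "G = generated_group {M\<in>G. complex_reflection M}"
    using assms by (simp add: complex_reflection_group_def)
  show ?thesis
  proof
    show "mat 1 \<in> G" by (subst G) (rule generated_group.gen_one)
    show "M \<in> G \<Longrightarrow> N \<in> G \<Longrightarrow> M ** N \<in> G" for M N
      by (subst (asm) (1 2) G, subst G) (rule generated_group_mult)
  qed (use assms in \<open>simp_all add: complex_reflection_group_def\<close>)
qed

section \<open>Fundamental invariants\<close>

locale fundamental_invariant_system = finite_matrix_group G
  for G :: "((complex, 'n::{finite,linorder}) vec, 'n) vec set" +
  fixes \<phi> :: "'n \<Rightarrow> 'n mpoly"
  assumes fundamental: "fundamental_invariants G \<phi>"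
begin

abbreviation z :: "'n \<Rightarrow> 'n ratf" where
  "z k \<equiv> to_ratf (\<phi> k)"

abbreviation K :: "'n ratf set" where
  "K \<equiv> Kfield \<phi>"

abbreviation J :: "(('n ratf, 'n) vec, 'n) vec" where
  "J \<equiv> jacobian \<phi>"

lemma gamma_phi: "M \<in> G \<Longrightarrow> gamma M (\<phi> k) = \<phi> k"
  using fundamental by (simp add: fundamental_invariants_def invariant_ring_def)

lemma is_subfield_K: "is_subfield K"
  unfolding Kfield_def by (rule is_subfield_gen_field)

lemma ratf_const_in_K: "ratf_const c \<in> K"
  unfolding Kfield_def by (rule subsetD[OF gen_field_superset]) auto

lemma z_in_K: "z k \<in> K"
  unfolding Kfield_def by (rule subsetD[OF gen_field_superset]) auto

lemma to_ratf_mp_subst_phi_in_K: "to_ratf (mp_subst \<phi> a) \<in> K"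
  by (induction a rule: mpoly_induct)
    (simp_all add: ratf_const_in_K z_in_K mp_subst_add mp_subst_mult to_ratf_add to_ratf_mult
      subfield_add[OF is_subfield_K] subfield_mult[OF is_subfield_K])

lemma gamma_invariant_in_K:
  assumes "\<And>M. M \<in> G \<Longrightarrow> gamma M P = P"
  shows "to_ratf P \<in> K"
proof -
  have "P \<in> invariant_ring G" using assms by (simp add: invariant_ring_def)
  then obtain a where "P = mp_subst \<phi> a"
    using fundamental by (auto simp: fundamental_invariants_def)
  then show ?thesis by (simp add: to_ratf_mp_subst_phi_in_K)
qed

lemma gamma_orbit_prod:
  assumes N: "N \<in> G"
  shows "gamma N (\<Prod>M\<in>G. gamma M q) = (\<Prod>M\<in>G. gamma M q)"
proof -
  have "gamma N (\<Prod>M\<in>G. gamma M q) = (\<Prod>M\<in>G. gamma (N ** M) q)"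
    unfolding ring_hom_prod[OF is_ring_hom_gamma]
    by (rule prod.cong) (auto simp: gamma_gamma invertible_G N)
  also have "\<dots> = (\<Prod>M\<in>G. gamma M q)" by (rule prod_reindex_mult_left[OF N])
  finally show ?thesis .
qed

text \<open>Galois descent \<open>L\<^sup>G \<subseteq> K\<close>: multiplying numerator and denominator by the conjugates of the
  denominator makes the denominator, hence also the numerator, an invariant polynomial.\<close>

lemma ratf_act_invariant_in_K:
  assumes inv: "\<And>M. M \<in> G \<Longrightarrow> ratf_act M x = x"
  shows "x \<in> K"
proof -
  obtain p q where x: "x = Fract p q" and q: "q \<noteq> 0" by (cases x)
  define N where "N = (\<Prod>M\<in>G. gamma M q)"
  define R where "R = (\<Prod>M\<in>G - {mat 1}. gamma M q)"
  have "N = q * R"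
    unfolding N_def R_def by (subst prod.remove[OF finite_G mat_1_in_G]) simp
  then have x_N: "x * to_ratf N = to_ratf (p * R)"
    using mult_fract_cancel[OF q, of "p * R" 1] by (simp add: x to_ratf_def mult_ac)
  have N_inv: "gamma M N = N" if "M \<in> G" for M
    unfolding N_def using that by (rule gamma_orbit_prod)
  have "gamma M (p * R) = p * R" if M: "M \<in> G" for M
  proof -
    note M_inv = invertible_G[OF M]
    have "to_ratf (gamma M (p * R)) = ratf_act M (x * to_ratf N)"
      by (simp add: x_N ratf_act_to_ratf[OF M_inv])
    also have "\<dots> = ratf_act M x * ratf_act M (to_ratf N)"
      by (rule ring_hom_mult[OF is_ring_hom_ratf_act[OF M_inv]])
    also have "\<dots> = to_ratf (p * R)"
      by (simp add: inv M ratf_act_to_ratf[OF M_inv] N_inv x_N)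
    finally show ?thesis by (simp add: to_ratf_eq_iff)
  qed
  then have "to_ratf (p * R) \<in> K" and "to_ratf N \<in> K"
    using N_inv by (simp_all add: gamma_invariant_in_K)
  moreover have "N \<noteq> 0"
    unfolding N_def using finite_G q by (auto simp: gamma_eq_0_iff invertible_G)
  then have "x = to_ratf (p * R) / to_ratf N"
    using x_N by (simp add: field_simps flip: to_ratf_0 to_ratf_eq_iff)
  ultimately show ?thesis
    using subfield_divide[OF is_subfield_K] by simp
qed

text \<open>\<open>x\<^sub>j\<close> is a root of \<open>\<Prod>\<^sub>M (T - \<sigma>\<^sub>M x\<^sub>j)\<close>, whose coefficients are invariant.\<close>

lemma ratf_var_algebraic_over_K:
  "\<exists>Q. Q \<noteq> 0 \<and> (\<forall>k. coeff Q k \<in> K) \<and> poly Q (ratf_var j) = 0"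
proof (intro exI conjI allI)
  define Q where "Q = (\<Prod>M\<in>G. [:- ratf_act M (ratf_var j), 1:])"
  show "Q \<noteq> 0" unfolding Q_def using finite_G by (auto simp: prod_zero_iff)
  show "poly Q (ratf_var j) = 0"
    unfolding Q_def poly_prod using finite_G mat_1_in_G
    by (auto simp: prod_zero_iff intro!: bexI[of _ "mat 1"])
  show "coeff Q k \<in> K" for k
  proof (rule ratf_act_invariant_in_K)
    fix N assume N: "N \<in> G"
    note h = is_ring_hom_ratf_act[OF invertible_G[OF N]]
    have "map_poly (ratf_act N) Q = (\<Prod>M\<in>G. [:- ratf_act (N ** M) (ratf_var j), 1:])"
      unfolding Q_def map_poly_ring_hom_prod[OF h]
      by (rule prod.cong)
        (auto simp: map_poly_pCons ring_hom_0[OF h] ring_hom_1[OF h] ring_hom_uminus[OF h]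
          ratf_act_ratf_act invertible_G N)
    also have "\<dots> = Q"
      unfolding Q_def by (rule prod_reindex_mult_left[OF N])
    finally show "ratf_act N (coeff Q k) = coeff Q k"
      by (metis coeff_map_poly ring_hom_0[OF h])
  qed
qed

lemma derivation_eq_0_if_vanishes_on_z:
  assumes D: "is_derivation D" and const: "\<And>c. D (ratf_const c) = 0" and z: "\<And>k. D (z k) = 0"
  shows "D y = 0"
proof (rule derivation_ratf_eq_0[OF D const])
  fix j
  have "K \<subseteq> {y. D y = 0}"
    unfolding Kfield_def
    by (rule gen_field_least[OF is_subfield_derivation_kernel[OF D]]) (auto simp: const z)
  then have D_K: "y \<in> K \<Longrightarrow> D y = 0" for y by blast
  obtain Q where "Q \<noteq> 0" "\<forall>k. coeff Q k \<in> K" "poly Q (ratf_var j) = 0"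
    using ratf_var_algebraic_over_K by blast
  then show "D (ratf_var j) = 0"
    using derivation_algebraic_eq_0[OF D is_subfield_K D_K of_nat_ratf_neq_0] by blast
qed

lemma derivation_eq_if_eq_on_z:
  assumes "is_derivation D1" "is_derivation D2"
    and "\<And>c. D1 (ratf_const c) = 0" "\<And>c. D2 (ratf_const c) = 0"
    and "\<And>k. D1 (z k) = D2 (z k)"
  shows "D1 y = D2 y"
  using derivation_eq_0_if_vanishes_on_z[OF is_derivation_diff, of D1 D2 y] assms by simp

lemma jacobian_eq_ratf_pderiv: "J $ k $ l = ratf_pderiv l (z k)"
  by (simp add: jacobian_def ratf_pderiv_to_ratf)

text \<open>A vector \<open>w\<close> in the kernel of \<open>J\<close> gives the derivation \<open>\<Sum>\<^sub>l w\<^sub>l \<partial>/\<partial>x\<^sub>l\<close> killing all \<open>z\<^sub>k\<close>.\<close>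

lemma invertible_jacobian: "invertible J"
proof -
  have "w = 0" if w: "J *v w = 0" for w
  proof -
    let ?D = "\<lambda>y. \<Sum>l\<in>UNIV. ratf_pderiv l y * w $ l"
    have D: "is_derivation ?D" by (rule is_derivation_lincomb[OF is_derivation_ratf_pderiv])
    have "?D (z k) = (J *v w) $ k" for k
      by (simp add: matrix_vector_mult_def jacobian_eq_ratf_pderiv)
    then have D_z: "?D (z k) = 0" for k
      using w by simp
    have D_0: "?D y = 0" for y
      by (rule derivation_eq_0_if_vanishes_on_z[OF D]) (simp_all add: ratf_pderiv_const D_z)
    have "?D (ratf_var j) = (\<Sum>l\<in>UNIV. if l = j then w $ l else 0)" for j
      by (rule sum.cong) (auto simp: ratf_pderiv_var)
    then have "?D (ratf_var j) = w $ j" for j by simp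
    then show ?thesis using D_0 by (simp add: vec_eq_iff)
  qed
  then show ?thesis
    by (simp add: invertible_left_inverse matrix_left_invertible_ker)
qed

lemma sum_ratf_pderiv_z_matrix_inv_jacobian:
  "(\<Sum>l\<in>UNIV. ratf_pderiv l (z k) * matrix_inv J $ l $ i) = (if k = i then 1 else 0)"
proof -
  have "(\<Sum>l\<in>UNIV. ratf_pderiv l (z k) * matrix_inv J $ l $ i) = (J ** matrix_inv J) $ k $ i"
    by (simp add: matrix_matrix_mult_def jacobian_eq_ratf_pderiv)
  then show ?thesis by (simp add: matrix_inv_right[OF invertible_jacobian] mat_def)
qed

lemma delta_eq: "delta \<phi> i = (\<lambda>y. \<Sum>l\<in>UNIV. ratf_pderiv l y * matrix_inv J $ l $ i)"
  unfolding delta_def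
proof (rule the_equality)
  let ?D = "\<lambda>y. \<Sum>l\<in>UNIV. ratf_pderiv l y * matrix_inv J $ l $ i"
  have D: "is_derivation ?D" by (rule is_derivation_lincomb[OF is_derivation_ratf_pderiv])
  then show "is_derivation ?D \<and> (\<forall>c. ?D (ratf_const c) = 0) \<and> (\<forall>k. ?D (z k) = (if k = i then 1 else 0))"
    by (simp add: ratf_pderiv_const sum_ratf_pderiv_z_matrix_inv_jacobian)
  fix D' assume D': "is_derivation D' \<and> (\<forall>c. D' (ratf_const c) = 0) \<and> (\<forall>k. D' (z k) = (if k = i then 1 else 0))"
  show "D' = ?D"
  proof
    show "D' y = ?D y" for y
      by (rule derivation_eq_if_eq_on_z)
        (use D D' in \<open>simp_all add: ratf_pderiv_const sum_ratf_pderiv_z_matrix_inv_jacobian\<close>)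
  qed
qed

lemma is_derivation_delta: "is_derivation (delta \<phi> i)"
  unfolding delta_eq by (rule is_derivation_lincomb[OF is_derivation_ratf_pderiv])

lemma delta_const: "delta \<phi> i (ratf_const c) = 0"
  by (simp add: delta_eq ratf_pderiv_const)

lemma delta_z: "delta \<phi> i (z k) = (if k = i then 1 else 0)"
  by (simp add: delta_eq sum_ratf_pderiv_z_matrix_inv_jacobian)

lemma delta_commute: "delta \<phi> i (delta \<phi> j y) = delta \<phi> j (delta \<phi> i y)"
proof -
  have "delta \<phi> i (delta \<phi> j y) - delta \<phi> j (delta \<phi> i y) = 0"
    by (rule derivation_eq_0_if_vanishes_on_z
        [OF is_derivation_commutator[OF is_derivation_delta is_derivation_delta]])
      (simp_all add: delta_const delta_z derivation_0[OF is_derivation_delta]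
        derivation_1[OF is_derivation_delta])
  then show ?thesis by simp
qed

lemma Amat_integrability:
  "map_mat (delta \<phi> i) (Amat \<phi> j) - map_mat (delta \<phi> j) (Amat \<phi> i)
     = Amat \<phi> i ** Amat \<phi> j - Amat \<phi> j ** Amat \<phi> i"
proof -
  let ?Ji = "matrix_inv J" and ?dJ = "\<lambda>i. map_mat (delta \<phi> i) J"
  have dA: "map_mat (delta \<phi> a) (Amat \<phi> b)
      = map_mat (delta \<phi> a) (?dJ b) ** ?Ji - ?dJ b ** (?Ji ** ?dJ a ** ?Ji)" for a b
    unfolding Amat_def map_mat_derivation_mult[OF is_derivation_delta]
      map_mat_derivation_matrix_inv[OF is_derivation_delta invertible_jacobian]
    by (simp add: matrix_mul_uminus_right)
  have "map_mat (delta \<phi> i) (?dJ j) = map_mat (delta \<phi> j) (?dJ i)"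
    by (simp add: vec_eq_iff delta_commute)
  then have "map_mat (delta \<phi> i) (Amat \<phi> j) - map_mat (delta \<phi> j) (Amat \<phi> i)
      = ?dJ i ** (?Ji ** ?dJ j ** ?Ji) - ?dJ j ** (?Ji ** ?dJ i ** ?Ji)"
    by (simp add: dA algebra_simps)
  also have "\<dots> = Amat \<phi> i ** Amat \<phi> j - Amat \<phi> j ** Amat \<phi> i"
    by (simp add: Amat_def matrix_mul_assoc)
  finally show ?thesis .
qed

text \<open>\<open>\<sigma>\<^sub>M\<^sup>-\<^sup>1 \<circ> \<delta>\<^sub>i \<circ> \<sigma>\<^sub>M\<close> is a derivation with the same values on \<open>\<complex>\<close> and on the \<open>z\<^sub>k\<close>
  as \<open>\<delta>\<^sub>i\<close>, because the \<open>z\<^sub>k\<close> are invariant.\<close>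

lemma ratf_act_delta:
  assumes M: "M \<in> G"
  shows "ratf_act M (delta \<phi> i y) = delta \<phi> i (ratf_act M y)"
proof -
  obtain P where P: "P \<in> G" "M ** P = mat 1" using right_inverse_in_G[OF M] by blast
  have M_inv: "invertible M" and P_inv: "invertible P" using invertible_G M P by auto
  have "P ** M = mat 1" using P(2) matrix_left_right_inverse by blast
  then have PM: "ratf_act P (ratf_act M x) = x" for x
    by (simp add: ratf_act_ratf_act[OF P_inv M_inv])
  have MP: "ratf_act M (ratf_act P x) = x" for x
    by (simp add: ratf_act_ratf_act[OF M_inv P_inv] P(2))
  note hM = is_ring_hom_ratf_act[OF M_inv] and hP = is_ring_hom_ratf_act[OF P_inv]
  let ?D = "\<lambda>x. ratf_act P (delta \<phi> i (ratf_act M x))"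
  have "is_derivation ?D"
    unfolding is_derivation_def
    by (simp add: ring_hom_add[OF hM] ring_hom_mult[OF hM] ring_hom_add[OF hP] ring_hom_mult[OF hP]
        derivation_add[OF is_derivation_delta] derivation_mult[OF is_derivation_delta] PM)
  then have "?D y = delta \<phi> i y"
    by (rule derivation_eq_if_eq_on_z[OF _ is_derivation_delta])
      (simp_all add: ratf_act_to_ratf[OF M_inv] gamma_phi[OF M]
        delta_const delta_z ring_hom_0[OF hP] ring_hom_1[OF hP])
  then show ?thesis using MP by metis
qed

text \<open>The chain rule for \<open>\<phi>\<^sub>k = \<phi>\<^sub>k(x M\<^sup>-\<^sup>T)\<close>.\<close>

lemma jacobian_ratf_act:
  assumes M: "M \<in> G"
  shows "map_mat (ratf_act M) J = J ** map_mat ratf_const M"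
proof -
  have M_inv: "invertible M" using invertible_G M by auto
  let ?C = "map_mat ratf_const M" and ?C' = "map_mat ratf_const (matrix_inv M)"
  have "J $ k $ l = (map_mat (ratf_act M) J ** ?C') $ k $ l" for k l
  proof -
    have "J $ k $ l = to_ratf (mp_pderiv l (gamma M (\<phi> k)))"
      by (simp add: jacobian_def gamma_phi[OF M])
    also have "\<dots> = to_ratf (\<Sum>m\<in>UNIV. gamma M (mp_pderiv m (\<phi> k)) * mp_const (matrix_inv M $ m $ l))"
      by (simp add: gamma_eq_lin_subst mp_pderiv_lin_subst)
    also have "\<dots> = (map_mat (ratf_act M) J ** ?C') $ k $ l"
      by (simp add: matrix_matrix_mult_def to_ratf_sum to_ratf_mult ratf_act_to_ratf[OF M_inv]
          jacobian_def)
    finally show ?thesis .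
  qed
  then have "J = map_mat (ratf_act M) J ** ?C'" by (simp add: vec_eq_iff)
  then have "J ** ?C = map_mat (ratf_act M) J ** (?C' ** ?C)"
    by (simp add: matrix_mul_assoc)
  also have "?C' ** ?C = mat 1"
    by (simp add: map_mat_ring_hom_mult[OF is_ring_hom_ratf_const, symmetric]
        matrix_inv_left[OF M_inv] map_mat_ring_hom_mat_1[OF is_ring_hom_ratf_const])
  finally show ?thesis by simp
qed

lemma ratf_act_delta_jacobian:
  assumes M: "M \<in> G"
  shows "map_mat (ratf_act M) (map_mat (delta \<phi> i) J) = map_mat (delta \<phi> i) J ** map_mat ratf_const M"
proof -
  have "map_mat (delta \<phi> i) (map_mat ratf_const M) = 0"
    by (simp add: vec_eq_iff delta_const)
  moreover have "map_mat (ratf_act M) (map_mat (delta \<phi> i) J)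
      = map_mat (delta \<phi> i) (J ** map_mat ratf_const M)"
    by (simp add: vec_eq_iff ratf_act_delta[OF M] flip: jacobian_ratf_act[OF M])
  ultimately show ?thesis
    by (simp add: map_mat_derivation_mult[OF is_derivation_delta])
qed

lemma ratf_act_Amat:
  assumes M: "M \<in> G"
  shows "map_mat (ratf_act M) (Amat \<phi> i) = Amat \<phi> i"
proof -
  have M_inv: "invertible M" using invertible_G M by auto
  let ?C = "map_mat ratf_const M"
  have C_inv: "invertible ?C" by (rule invertible_map_mat_ring_hom[OF is_ring_hom_ratf_const M_inv])
  note h = is_ring_hom_ratf_act[OF M_inv]
  have "map_mat (ratf_act M) (Amat \<phi> i)
      = map_mat (delta \<phi> i) J ** ?C ** matrix_inv (J ** ?C)"
    by (simp add: Amat_def map_mat_ring_hom_mult[OF h] ratf_act_delta_jacobian[OF M]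
        map_mat_ring_hom_matrix_inv[OF h invertible_jacobian] jacobian_ratf_act[OF M])
  also have "\<dots> = map_mat (delta \<phi> i) J ** (?C ** matrix_inv ?C) ** matrix_inv J"
    by (simp add: matrix_inv_mult[OF invertible_jacobian C_inv] matrix_mul_assoc)
  also have "\<dots> = Amat \<phi> i"
    by (simp add: matrix_inv_right[OF C_inv] Amat_def)
  finally show ?thesis .
qed

lemma Amat_in_K: "Amat \<phi> i $ r $ s \<in> K"
  by (rule ratf_act_invariant_in_K) (metis ratf_act_Amat map_mat_nth)

text \<open>A common constant \<open>y\<close> of the \<open>\<delta>\<^sub>i\<close> is a constant of every \<open>\<partial>/\<partial>x\<^sub>l = \<Sum>\<^sub>k (\<partial>\<phi>\<^sub>k/\<partial>x\<^sub>l) \<delta>\<^sub>k\<close>.\<close>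

lemma delta_constant_in_K:
  assumes "\<And>i. delta \<phi> i y = 0"
  shows "y \<in> K"
proof -
  have "ratf_pderiv l y = (\<Sum>k\<in>UNIV. delta \<phi> k y * ratf_pderiv l (z k))" for l
  proof (rule derivation_eq_if_eq_on_z[of _ "\<lambda>y. \<Sum>k\<in>UNIV. delta \<phi> k y * ratf_pderiv l (z k)"])
    show "is_derivation (\<lambda>y. \<Sum>k\<in>UNIV. delta \<phi> k y * ratf_pderiv l (z k))"
      by (rule is_derivation_lincomb[OF is_derivation_delta])
    have "(\<Sum>k\<in>UNIV. delta \<phi> k (z m) * ratf_pderiv l (z k))
        = (\<Sum>k\<in>UNIV. if k = m then ratf_pderiv l (z k) else 0)" for m
      by (rule sum.cong) (auto simp: delta_z)
    then show "ratf_pderiv l (z m) = (\<Sum>k\<in>UNIV. delta \<phi> k (z m) * ratf_pderiv l (z k))" for m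
      by simp
  qed (simp_all add: is_derivation_ratf_pderiv ratf_pderiv_const delta_const)
  then have "ratf_pderiv l y = 0" for l
    using assms by simp
  then obtain c where "y = ratf_const c"
    using ratf_pderiv_eq_0_imp_const by blast
  then show ?thesis using ratf_const_in_K by simp
qed

text \<open>Euler's identity \<open>\<Sum>\<^sub>l x\<^sub>l \<partial>\<phi>\<^sub>k/\<partial>x\<^sub>l = (deg \<phi>\<^sub>k) \<phi>\<^sub>k\<close>.\<close>

lemma jacobian_mult_vars_in_K: "(J *v (\<chi> l. ratf_var l)) $ k \<in> K"
proof -
  have "\<exists>d. \<forall>m\<in>Poly_Mapping.keys (\<phi> k). (\<Sum>i\<in>UNIV. Poly_Mapping.lookup m i) = d"
    using fundamental by (simp add: fundamental_invariants_def mp_homogeneous_def)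
  then obtain d where d: "\<And>m. m \<in> Poly_Mapping.keys (\<phi> k) \<Longrightarrow> (\<Sum>i\<in>UNIV. Poly_Mapping.lookup m i) = d"
    by blast
  have "(J *v (\<chi> l. ratf_var l)) $ k = to_ratf (\<Sum>l\<in>UNIV. euler_op l (\<phi> k))"
    by (simp add: matrix_vector_mult_def jacobian_def to_ratf_sum to_ratf_mult euler_op_def
        mult.commute)
  also have "\<dots> = of_nat d * z k"
    by (simp add: sum_euler_op_homogeneous[OF d] to_ratf_mult to_ratf_of_nat)
  finally show ?thesis
    using subfield_mult[OF is_subfield_K subfield_of_nat[OF is_subfield_K] z_in_K] by simp
qed

text \<open>Cramer's rule applied to \<open>J x = J x\<close>, whose right-hand side lies in \<open>K\<close>.\<close>

lemma gen_field_K_jacobian: "gen_field (K \<union> {J $ r $ s | r s. True}) = UNIV"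
proof (rule subfield_ratf_eq_UNIV[OF is_subfield_gen_field])
  let ?F = "gen_field (K \<union> {J $ r $ s | r s. True})"
  have K_F: "y \<in> K \<Longrightarrow> y \<in> ?F" and J_F: "J $ r $ s \<in> ?F" for y r s
    by (auto intro: subsetD[OF gen_field_superset])
  show "ratf_const c \<in> ?F" for c by (rule K_F[OF ratf_const_in_K])
  have "det J \<noteq> 0" using invertible_jacobian invertible_det_nz by blast
  then have "(\<chi> l. ratf_var l) $ l \<in> ?F" for l
    by (rule subfield_cramer[OF is_subfield_gen_field J_F K_F[OF jacobian_mult_vars_in_K] _ refl])
  then show "ratf_var l \<in> ?F" for l by simp
qed

lemma picard_vessiot_jacobian: "picard_vessiot K (delta \<phi>) (Amat \<phi>)"
  unfolding picard_vessiot_def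
proof (intro conjI exI[of _ J])
  show "{c. \<forall>i. delta \<phi> i c = 0} = {c \<in> K. \<forall>i. delta \<phi> i c = 0}"
    using delta_constant_in_K by blast
  show "\<forall>i. map_mat (delta \<phi> i) J = Amat \<phi> i ** J"
    by (simp add: Amat_def matrix_mul_assoc[symmetric] matrix_inv_left[OF invertible_jacobian])
  show "gen_field (K \<union> {J $ r $ s | r s. True}) = UNIV" by (rule gen_field_K_jacobian)
qed (rule invertible_jacobian)

end

theorem theorem4p1:
  fixes G :: "((complex, 'n::{finite,linorder}) vec, 'n) vec set"
    and \<phi> :: "'n \<Rightarrow> 'n mpoly"
  assumes "complex_reflection_group G"
    and "fundamental_invariants G \<phi>"
  shows "(\<forall>i r s. Amat \<phi> i $ r $ s \<in> Kfield \<phi>)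
    \<and> (\<forall>i j. map_mat (delta \<phi> i) (Amat \<phi> j) - map_mat (delta \<phi> j) (Amat \<phi> i)
             = Amat \<phi> i ** Amat \<phi> j - Amat \<phi> j ** Amat \<phi> i)
    \<and> picard_vessiot (Kfield \<phi>) (delta \<phi>) (Amat \<phi>)"
proof -
  interpret fundamental_invariant_system G \<phi>
    using assms by (intro fundamental_invariant_system.intro
        finite_matrix_group_if_complex_reflection_group fundamental_invariant_system_axioms.intro)
  show ?thesis using Amat_in_K Amat_integrability picard_vessiot_jacobian by blast
qed

end
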